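(* Let $n\ge1,m,k,l$ be non-negative integers with $m,k\le n$ and $m+k-n\le l\le\min(m,k)$, and let $X$ be a random variable with $\Pr[X=x]=p(x\mid n,m,k,l)$ for $x=0,1,\dots,\lfloor n/2\rfloor$. Then \[ \frac{\mathbb V[X]}{n^2}=\frac{\mathbb E[X]}{n}\Bigl(1-\frac{\mathbb E[X]}{n}\Bigr)+\frac{\mathbb E[X]}{n^2}-\eta,\qquad \eta:=\frac{m(n-m)-(m-l)(n-m-k+l)}{n^2}. \]
   Context: Let $M:=m-l$, $N:=n-m-k+l$. Let $\mathbb{C}^2$ have orthonormal basis $|0\rangle,|1\rangle$ and give $(\mathbb{C}^2)^{\otimes n}$ the induced Hermitian inner product. Define $|\Xi_{n,m|k,l}\rangle:=|1\rangle^{\otimes l}\otimes|0\rangle^{\otimes(k-l)}\otimes\binom{M+N}{M}^{-1/2}\sum_{I}|I\rangle$, the sum over all $I\in\{0,1\}^{n-k}$ with exactly $M$ ones (where $|i_1\cdots i_r\rangle=|i_1\rangle\otimes\cdots\otimes|i_r\rangle$). $\mathfrak S_n$ acts on $(\mathbb{C}^2)^{\otimes n}$ by permuting tensor factors. For $0\le x\le\lfloor n/2\rfloor$, $\mathsf P_{(n-x,x)}$ is the orthogonal projection onto the isotypic component of the irreducible $\mathfrak S_n$-representation labelled by the partition $(n-x,x)$, and $p(x\mid n,m,k,l):=\langle\Xi_{n,m|k,l}|\mathsf P_{(n-x,x)}|\Xi_{n,m|k,l}\rangle$; these values form a probability distribution on $\{0,\dots,\lfloor n/2\rfloor\}$.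 *)

theory Defs
  imports Complex_Main "HOL-Combinatorics.Permutations"
begin

text \<open>Vectors of (C^2)^{\<otimes>n} are modelled as functions from bit strings to complex
  amplitudes; a bit string i_0 ... i_{n-1} is represented by the set S of positions j < n
  with i_j = 1. Only S \<subseteq> {..<n} are basis vectors.\<close>

type_synonym qvec = "nat set \<Rightarrow> complex"

definition is_qvec :: "nat \<Rightarrow> qvec \<Rightarrow> bool" where
  "is_qvec n f \<longleftrightarrow> (\<forall>S. \<not> S \<subseteq> {..<n} \<longrightarrow> f S = 0)"

definition qinner :: "nat \<Rightarrow> qvec \<Rightarrow> qvec \<Rightarrow> complex" where
  "qinner n f g = (\<Sum>S\<in>Pow {..<n}. cnj (f S) * g S)"

text \<open>Action of a permutation of the tensor factors: the bit in position j is moved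
  to position sigma j. The same formula is the natural action on functions of
  tabloids (identified with their second-row set).\<close>
definition pact :: "(nat \<Rightarrow> nat) \<Rightarrow> qvec \<Rightarrow> qvec" where
  "pact \<sigma> f = (\<lambda>S. f (inv \<sigma> ` S))"

definition cspan :: "qvec set \<Rightarrow> qvec set" where
  "cspan A = {f. \<exists>(k::nat) c v. (\<forall>i<k. v i \<in> A) \<and> f = (\<lambda>S. \<Sum>i<k. c i * v i S)}"

text \<open>Specht module S^{(n-x,x)} inside the permutation module M^{(n-x,x)}, whose tabloids
  are identified with their second row (an x-subset of {..<n}). A Young tableau of shape
  (n-x,x) is given (as far as the polytabloid is concerned) by its x columns of length two:
  column i has entry a i in the first row and b i in the second row; the remaining
  n - 2x entries form columns of length one and do not affect the polytabloid.\<close>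
definition is_tableau_cols :: "nat \<Rightarrow> nat \<Rightarrow> (nat \<Rightarrow> nat) \<Rightarrow> (nat \<Rightarrow> nat) \<Rightarrow> bool" where
  "is_tableau_cols n x a b \<longleftrightarrow>
     inj_on a {..<x} \<and> inj_on b {..<x} \<and> a ` {..<x} \<inter> b ` {..<x} = {} \<and>
     a ` {..<x} \<subseteq> {..<n} \<and> b ` {..<x} \<subseteq> {..<n}"

definition polytabloid :: "nat \<Rightarrow> (nat \<Rightarrow> nat) \<Rightarrow> (nat \<Rightarrow> nat) \<Rightarrow> qvec" where
  "polytabloid x a b = (\<lambda>S. \<Sum>C\<in>Pow {..<x}.
      (-1) ^ card C * (if S = b ` ({..<x} - C) \<union> a ` C then 1 else 0))"

definition specht :: "nat \<Rightarrow> nat \<Rightarrow> qvec set" where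
  "specht n x = cspan {polytabloid x a b | a b. is_tableau_cols n x a b}"

definition equiv_map :: "nat \<Rightarrow> nat \<Rightarrow> (qvec \<Rightarrow> qvec) \<Rightarrow> bool" where
  "equiv_map n x L \<longleftrightarrow>
     (\<forall>f\<in>specht n x. is_qvec n (L f)) \<and>
     (\<forall>f\<in>specht n x. \<forall>g\<in>specht n x. L (\<lambda>S. f S + g S) = (\<lambda>S. L f S + L g S)) \<and>
     (\<forall>f\<in>specht n x. \<forall>c. L (\<lambda>S. c * f S) = (\<lambda>S. c * L f S)) \<and>
     (\<forall>\<sigma>. \<sigma> permutes {..<n} \<longrightarrow> (\<forall>f\<in>specht n x. L (pact \<sigma> f) = pact \<sigma> (L f)))"

text \<open>Isotypic component of the irreducible S_n-representation labelled by (n-x,x):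
  the sum of all subrepresentations isomorphic to S^{(n-x,x)}, i.e. the span of the
  images of all equivariant maps from S^{(n-x,x)}.\<close>
definition isotypic :: "nat \<Rightarrow> nat \<Rightarrow> qvec set" where
  "isotypic n x = cspan {L f | L f. equiv_map n x L \<and> f \<in> specht n x}"

definition orth_proj :: "nat \<Rightarrow> qvec set \<Rightarrow> qvec \<Rightarrow> qvec" where
  "orth_proj n U v = (THE u. u \<in> U \<and> (\<forall>w\<in>U. qinner n w (\<lambda>S. v S - u S) = 0))"

definition Xi :: "nat \<Rightarrow> nat \<Rightarrow> nat \<Rightarrow> nat \<Rightarrow> qvec" where
  "Xi n m k l = (\<lambda>S.
     if S \<subseteq> {..<n} \<and> {..<l} \<subseteq> S \<and> S \<inter> {l..<k} = {} \<and> card (S \<inter> {k..<n}) = m - l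
     then complex_of_real (1 / sqrt (real ((n - k) choose (m - l)))) else 0)"

definition pdist :: "nat \<Rightarrow> nat \<Rightarrow> nat \<Rightarrow> nat \<Rightarrow> nat \<Rightarrow> real" where
  "pdist x n m k l = Re (qinner n (Xi n m k l) (orth_proj n (isotypic n x) (Xi n m k l)))"

definition EX_p :: "nat \<Rightarrow> nat \<Rightarrow> nat \<Rightarrow> nat \<Rightarrow> real" where
  "EX_p n m k l = (\<Sum>x\<le>n div 2. real x * pdist x n m k l)"

definition VX_p :: "nat \<Rightarrow> nat \<Rightarrow> nat \<Rightarrow> nat \<Rightarrow> real" where
  "VX_p n m k l = (\<Sum>x\<le>n div 2. (real x - EX_p n m k l)^2 * pdist x n m k l)"

end

theory Submission
  imports Defs
begin

text \<open>Adding or removing a \<open>1\<close> in some position generates an \<open>sl\<^sub>2\<close>-action on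
  \<open>(\<complex>\<^sup>2)\<^sup>\<otimes>\<^sup>n\<close> that commutes with the symmetric group. Its Casimir operator \<open>C\<close> is the class sum
  \<open>\<Sum>\<^bsub>i,j\<^esub> (1 - (i j)) / 2\<close>, so it acts on the isotypic component of \<open>(n - x, x)\<close> by a
  scalar, which is \<open>x (n - x + 1)\<close> because the Specht module consists of highest weight vectors
  of weight \<open>x\<close>. Conversely, \<open>C\<close> is diagonalisable on every weight space, and its
  \<open>x (n - x + 1)\<close>-eigenspace is generated by raising highest weight vectors of weight \<open>x\<close>, which
  span the Specht module. Hence the projections of \<open>\<Xi>\<close> onto the isotypic components are its
  Casimir eigencomponents, and \<open>\<Sum>\<^sub>x x (n + 1 - x) p(x) = \<langle>\<Xi>|C|\<Xi>\<rangle>\<close>. On the support of \<open>\<Xi>\<close> the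
  operator \<open>C\<close> acts by the scalar \<open>m (n - m) - (m - l) (n - m - k + l) = n\<^sup>2 \<eta>\<close>; the identity
  follows from \<open>Var X = (n + 1) E X - E (X (n + 1 - X)) - (E X)\<^sup>2\<close>.\<close>

section \<open>Linear algebra of set functions\<close>

lemma cspan_zero: "(\<lambda>S. 0) \<in> cspan A"
  unfolding cspan_def by (rule CollectI, rule exI[of _ 0]) auto

lemma cspan_add_scaled_base:
  assumes "f \<in> cspan A" "v \<in> A"
  shows "(\<lambda>S. f S + c * v S) \<in> cspan A"
proof -
  obtain k :: nat and d w where kw: "\<forall>i<k. w i \<in> A" "f = (\<lambda>S. \<Sum>i<k. d i * w i S)"
    using assms(1) unfolding cspan_def by blast
  have "(\<lambda>S. f S + c * v S) = (\<lambda>S. \<Sum>i<Suc k. (d(k := c)) i * (w(k := v)) i S)"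
    by (simp add: kw(2))
  moreover have "\<forall>i<Suc k. (w(k := v)) i \<in> A"
    using kw(1) assms(2) by (auto simp: less_Suc_eq)
  ultimately show ?thesis unfolding cspan_def by blast
qed

lemma cspan_base: "v \<in> A \<Longrightarrow> v \<in> cspan A"
  using cspan_add_scaled_base[OF cspan_zero, of v A 1] by simp

lemma cspan_induct [consumes 1, case_names zero add]:
  assumes "f \<in> cspan A"
    and "P (\<lambda>S. 0)"
    and "\<And>g c v. P g \<Longrightarrow> v \<in> A \<Longrightarrow> P (\<lambda>S. g S + c * v S)"
  shows "P f"
proof -
  obtain k :: nat and d w where kw: "\<forall>i<k. w i \<in> A" "f = (\<lambda>S. \<Sum>i<k. d i * w i S)"
    using assms(1) unfolding cspan_def by blast
  have "P (\<lambda>S. \<Sum>i<j. d i * w i S)" if "j \<le> k" for j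
    using that
  proof (induction j)
    case 0
    then show ?case using assms(2) by simp
  next
    case (Suc j)
    then show ?case
      using assms(3)[of "\<lambda>S. \<Sum>i<j. d i * w i S" "w j" "d j"] kw(1) by simp
  qed
  then show ?thesis using kw(2) by simp
qed

lemma cspan_add:
  assumes "f \<in> cspan A" "g \<in> cspan A"
  shows "(\<lambda>S. f S + g S) \<in> cspan A"
  using assms(2)
proof (induction rule: cspan_induct)
  case zero
  then show ?case using assms(1) by simp
next
  case (add h c v)
  then show ?case
    using cspan_add_scaled_base[OF add.IH add.hyps] by (simp add: add.assoc)
qed

lemma cspan_scale:
  assumes "f \<in> cspan A"
  shows "(\<lambda>S. c * f S) \<in> cspan A"
  using assms
proof (induction rule: cspan_induct)
  case zero
  then show ?case using cspan_zero by simp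
next
  case (add h d v)
  then show ?case
    using cspan_add_scaled_base[OF add.IH add.hyps, of "c * d"] by (simp add: algebra_simps)
qed

lemma cspan_sum:
  assumes "finite I" "\<And>i. i \<in> I \<Longrightarrow> g i \<in> cspan A"
  shows "(\<lambda>S. \<Sum>i\<in>I. c i * g i S) \<in> cspan A"
  using assms
proof (induction I rule: finite_induct)
  case empty
  then show ?case using cspan_zero by simp
next
  case (insert j I)
  then show ?case
    using cspan_add[OF cspan_scale[of "g j" A "c j"] insert.IH] by simp
qed

lemma cspan_mono: "A \<subseteq> B \<Longrightarrow> cspan A \<subseteq> cspan B"
  unfolding cspan_def by blast

lemma cspan_closed:
  assumes "f \<in> cspan A" "\<And>v. v \<in> A \<Longrightarrow> P v" "P (\<lambda>S. 0)"
    "\<And>g h. P g \<Longrightarrow> P h \<Longrightarrow> P (\<lambda>S. g S + h S)" "\<And>g c. P g \<Longrightarrow> P (\<lambda>S. c * g S)"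
  shows "P f"
  using assms(1)
proof (induction rule: cspan_induct)
  case zero
  then show ?case using assms(3) .
next
  case (add g c v)
  then show ?case using assms(2,4,5) by blast
qed

definition qlinear :: "(qvec \<Rightarrow> qvec) \<Rightarrow> bool" where
  "qlinear L \<longleftrightarrow> (\<forall>f g. L (\<lambda>S. f S + g S) = (\<lambda>S. L f S + L g S)) \<and>
     (\<forall>c f. L (\<lambda>S. c * f S) = (\<lambda>S. c * L f S))"

definition qsubspace :: "qvec set \<Rightarrow> bool" where
  "qsubspace V \<longleftrightarrow> (\<lambda>S. 0) \<in> V \<and> (\<forall>f\<in>V. \<forall>g\<in>V. (\<lambda>S. f S + g S) \<in> V) \<and>
     (\<forall>c. \<forall>f\<in>V. (\<lambda>S. c * f S) \<in> V)"

lemma qlinear_add: "qlinear L \<Longrightarrow> L (\<lambda>S. f S + g S) = (\<lambda>S. L f S + L g S)"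
  unfolding qlinear_def by blast

lemma qlinear_scale: "qlinear L \<Longrightarrow> L (\<lambda>S. c * f S) = (\<lambda>S. c * L f S)"
  unfolding qlinear_def by blast

lemma qlinear_zero: "qlinear L \<Longrightarrow> L (\<lambda>S. 0) = (\<lambda>S. 0)"
  using qlinear_scale[of L 0 "\<lambda>S. 0"] by simp

lemma qlinear_diff: "qlinear L \<Longrightarrow> L (\<lambda>S. f S - g S) = (\<lambda>S. L f S - L g S)"
  using qlinear_add[of L f "\<lambda>S. - 1 * g S"] qlinear_scale[of L "- 1" g] by simp

lemma qlinear_sum:
  assumes "qlinear L" "finite I"
  shows "L (\<lambda>S. \<Sum>i\<in>I. g i S) = (\<lambda>S. \<Sum>i\<in>I. L (g i) S)"
  using assms(2) by induction (simp_all add: qlinear_zero[OF assms(1)] qlinear_add[OF assms(1)])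

lemma qlinear_funpow: "qlinear L \<Longrightarrow> qlinear (L ^^ r)"
  unfolding qlinear_def by (induction r) simp_all

lemma qsubspace_zero: "qsubspace V \<Longrightarrow> (\<lambda>S. 0) \<in> V"
  unfolding qsubspace_def by blast

lemma qsubspace_add: "qsubspace V \<Longrightarrow> f \<in> V \<Longrightarrow> g \<in> V \<Longrightarrow> (\<lambda>S. f S + g S) \<in> V"
  unfolding qsubspace_def by blast

lemma qsubspace_scale: "qsubspace V \<Longrightarrow> f \<in> V \<Longrightarrow> (\<lambda>S. c * f S) \<in> V"
  unfolding qsubspace_def by blast

lemma qsubspace_diff: "qsubspace V \<Longrightarrow> f \<in> V \<Longrightarrow> g \<in> V \<Longrightarrow> (\<lambda>S. f S - g S) \<in> V"
  using qsubspace_add[of V f "\<lambda>S. - 1 * g S"] qsubspace_scale[of V g "- 1"] by simp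

lemma qsubspace_cspan: "qsubspace (cspan A)"
  unfolding qsubspace_def using cspan_zero cspan_add cspan_scale by blast

fun op_poly :: "(qvec \<Rightarrow> qvec) \<Rightarrow> complex list \<Rightarrow> qvec \<Rightarrow> qvec" where
  "op_poly T [] f = f"
| "op_poly T (c # cs) f = (\<lambda>S. T (op_poly T cs f) S - c * op_poly T cs f S)"

lemma op_poly_append: "op_poly T (cs @ ds) f = op_poly T cs (op_poly T ds f)"
  by (induction cs) auto

lemma qlinear_op_poly:
  assumes "qlinear T"
  shows "qlinear (op_poly T cs)"
  by (induction cs)
    (auto simp: qlinear_def qlinear_add[OF assms] qlinear_scale[OF assms] algebra_simps)

lemma op_poly_mem:
  assumes "qsubspace V" "T ` V \<subseteq> V" "f \<in> V"
  shows "op_poly T cs f \<in> V"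
  by (induction cs) (use assms in \<open>auto intro!: qsubspace_diff qsubspace_scale\<close>)

lemma op_poly_commute:
  assumes "qlinear M" "\<And>f. T (M f) = M (T f)"
  shows "op_poly T cs (M f) = M (op_poly T cs f)"
  by (induction cs) (simp_all add: assms qlinear_diff[OF assms(1)] qlinear_scale[OF assms(1)])

lemma op_poly_eigenvector:
  assumes "qlinear T" "T f = (\<lambda>S. a * f S)"
  shows "op_poly T cs f = (\<lambda>S. (\<Prod>c\<leftarrow>cs. a - c) * f S)"
proof (induction cs)
  case (Cons c cs)
  then show ?case by (simp add: qlinear_scale[OF assms(1)] assms(2)) (simp add: algebra_simps)
qed simp

text \<open>The component for the first root is obtained by applying the remaining factors and
  dividing by their value at that root.\<close>
lemma eigen_decomposition:
  assumes "qlinear T" "qsubspace V" "T ` V \<subseteq> V"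
    and "distinct cs" "f \<in> V" "op_poly T cs f = (\<lambda>S. 0)"
  shows "\<exists>g. (\<forall>c. g c \<in> V \<and> T (g c) = (\<lambda>S. c * g c S)) \<and> f = (\<lambda>S. \<Sum>c\<in>set cs. g c S)"
  using assms(4-6)
proof (induction cs arbitrary: f)
  case Nil
  then show ?case
    by (intro exI[of _ "\<lambda>c S. 0"]) (simp add: qsubspace_zero[OF assms(2)] qlinear_zero[OF assms(1)])
next
  case (Cons c cs)
  define \<pi> where "\<pi> = (\<Prod>c'\<leftarrow>cs. c - c')"
  have "\<pi> \<noteq> 0" using Cons.prems(1) by (auto simp: \<pi>_def prod_list_zero_iff)
  define f1 where "f1 = (\<lambda>S. (1 / \<pi>) * op_poly T cs f S)"
  have f1_eigen: "T f1 = (\<lambda>S. c * f1 S)"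
    using Cons.prems(3) unfolding f1_def qlinear_scale[OF assms(1)] by (simp add: fun_eq_iff)
  have f1_mem: "f1 \<in> V"
    unfolding f1_def by (intro qsubspace_scale[OF assms(2)] op_poly_mem assms Cons.prems)
  have "op_poly T cs f1 = op_poly T cs f"
    using op_poly_eigenvector[OF assms(1) f1_eigen, of cs] \<open>\<pi> \<noteq> 0\<close>
    by (simp add: f1_def \<pi>_def[symmetric] fun_eq_iff)
  then have "op_poly T cs (\<lambda>S. f S - f1 S) = (\<lambda>S. 0)"
    by (simp add: qlinear_diff[OF qlinear_op_poly[OF assms(1)]])
  then obtain g where g: "\<forall>c. g c \<in> V \<and> T (g c) = (\<lambda>S. c * g c S)"
    "(\<lambda>S. f S - f1 S) = (\<lambda>S. \<Sum>c\<in>set cs. g c S)"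
    using Cons.IH[of "\<lambda>S. f S - f1 S"] Cons.prems qsubspace_diff[OF assms(2) _ f1_mem] by auto
  have "f = (\<lambda>S. \<Sum>c'\<in>set (c # cs). (g(c := f1)) c' S)"
  proof
    fix S
    have "(\<Sum>c'\<in>set cs. (g(c := f1)) c' S) = (\<Sum>c'\<in>set cs. g c' S)"
      using Cons.prems(1) by (intro sum.cong) auto
    also have "\<dots> = f S - f1 S" using fun_cong[OF g(2), of S] by simp
    finally show "f S = (\<Sum>c'\<in>set (c # cs). (g(c := f1)) c' S)"
      using Cons.prems(1) by simp
  qed
  moreover have "\<forall>c'. (g(c := f1)) c' \<in> V \<and> T ((g(c := f1)) c') = (\<lambda>S. c' * (g(c := f1)) c' S)"
    using g(1) f1_mem f1_eigen by auto
  ultimately show ?case by blast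
qed

section \<open>Raising, lowering and the Casimir operator\<close>

definition raise_op :: "nat \<Rightarrow> qvec \<Rightarrow> qvec" where
  "raise_op n f = (\<lambda>S. if S \<subseteq> {..<n} then (\<Sum>i\<in>S. f (S - {i})) else 0)"

definition lower_op :: "nat \<Rightarrow> qvec \<Rightarrow> qvec" where
  "lower_op n f = (\<lambda>S. if S \<subseteq> {..<n} then (\<Sum>j\<in>{..<n} - S. f (insert j S)) else 0)"

definition weight_mult :: "nat \<Rightarrow> (nat \<Rightarrow> complex) \<Rightarrow> qvec \<Rightarrow> qvec" where
  "weight_mult n h f = (\<lambda>S. if S \<subseteq> {..<n} then h (card S) * f S else 0)"

definition casimir_eig :: "nat \<Rightarrow> nat \<Rightarrow> complex" where
  "casimir_eig n s = of_nat s * (of_nat n - of_nat s + 1)"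

text \<open>\<open>raise_op\<close> and \<open>lower_op\<close> are the total ladder operators \<open>\<Sum>\<^sub>j \<sigma>\<^sub>j\<^sup>+\<close> and
  \<open>\<Sum>\<^sub>j \<sigma>\<^sub>j\<^sup>-\<close> of the \<open>sl\<^sub>2\<close>-action on \<open>(\<complex>\<^sup>2)\<^sup>\<otimes>\<^sup>n\<close>, and \<open>casimir\<close> is
  its Casimir operator, normalised to act by \<open>x (n - x + 1)\<close> on the irreducible summands
  with highest weight vectors of weight \<open>x\<close>.\<close>
definition casimir :: "nat \<Rightarrow> qvec \<Rightarrow> qvec" where
  "casimir n f = (\<lambda>S. weight_mult n (casimir_eig n) f S - raise_op n (lower_op n f) S)"

lemma qlinear_raise_op: "qlinear (raise_op n)"
  unfolding qlinear_def raise_op_def by (auto simp: sum.distrib sum_distrib_left)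

lemma qlinear_lower_op: "qlinear (lower_op n)"
  unfolding qlinear_def lower_op_def by (auto simp: sum.distrib sum_distrib_left)

lemma qlinear_weight_mult: "qlinear (weight_mult n h)"
  unfolding qlinear_def weight_mult_def by (auto simp: algebra_simps)

lemma qlinear_casimir: "qlinear (casimir n)"
  unfolding qlinear_def casimir_def
  by (simp add: qlinear_add[OF qlinear_weight_mult] qlinear_add[OF qlinear_lower_op]
      qlinear_add[OF qlinear_raise_op] qlinear_scale[OF qlinear_weight_mult]
      qlinear_scale[OF qlinear_lower_op] qlinear_scale[OF qlinear_raise_op] algebra_simps)

lemma is_qvec_raise_op: "is_qvec n (raise_op n f)"
  unfolding is_qvec_def raise_op_def by auto

lemma is_qvec_lower_op: "is_qvec n (lower_op n f)"
  unfolding is_qvec_def lower_op_def by auto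

lemma weight_mult_apply:
  "weight_mult n h f S = (if S \<subseteq> {..<n} then h (card S) * f S else 0)"
  by (simp add: weight_mult_def)

lemma raise_lower_expand:
  assumes "S \<subseteq> {..<n}"
  shows "raise_op n (lower_op n f) S =
    of_nat (card S) * f S + (\<Sum>i\<in>S. \<Sum>j\<in>{..<n} - S. f (insert j (S - {i})))"
proof -
  have "lower_op n f (S - {i}) = f S + (\<Sum>j\<in>{..<n} - S. f (insert j (S - {i})))" if "i \<in> S" for i
  proof -
    have "{..<n} - (S - {i}) = insert i ({..<n} - S)" "S - {i} \<subseteq> {..<n}"
      using that assms by auto
    then have "lower_op n f (S - {i}) = (\<Sum>j\<in>insert i ({..<n} - S). f (insert j (S - {i})))"
      using assms by (simp add: lower_op_def)
    then show ?thesis using that by (simp add: insert_absorb)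
  qed
  then show ?thesis using assms by (simp add: raise_op_def sum.distrib)
qed

lemma lower_raise_expand:
  assumes "S \<subseteq> {..<n}"
  shows "lower_op n (raise_op n f) S =
    of_nat (n - card S) * f S + (\<Sum>i\<in>S. \<Sum>j\<in>{..<n} - S. f (insert j (S - {i})))"
proof -
  have fin: "finite S" using assms finite_subset by blast
  have "raise_op n f (insert j S) = f S + (\<Sum>i\<in>S. f (insert j (S - {i})))" if "j \<in> {..<n} - S" for j
  proof -
    have "raise_op n f (insert j S) = f (insert j S - {j}) + (\<Sum>i\<in>S. f (insert j S - {i}))"
      using assms that fin by (simp add: raise_op_def)
    moreover have "insert j S - {i} = insert j (S - {i})" if "i \<in> S" for i
      using \<open>j \<in> {..<n} - S\<close> that by auto
    ultimately show ?thesis using that by simp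
  qed
  then have "lower_op n (raise_op n f) S =
      of_nat (card ({..<n} - S)) * f S + (\<Sum>j\<in>{..<n} - S. \<Sum>i\<in>S. f (insert j (S - {i})))"
    using assms by (simp add: lower_op_def sum.distrib)
  then show ?thesis using assms fin by (simp add: card_Diff_subset sum.swap[of _ "{..<n} - S"])
qed

lemma lower_raise_commutator:
  "lower_op n (raise_op n f) =
     (\<lambda>S. raise_op n (lower_op n f) S + weight_mult n (\<lambda>s. of_nat n - 2 * of_nat s) f S)"
proof
  fix S
  show "lower_op n (raise_op n f) S =
      raise_op n (lower_op n f) S + weight_mult n (\<lambda>s. of_nat n - 2 * of_nat s) f S"
  proof (cases "S \<subseteq> {..<n}")
    case True
    then have "card S \<le> n" using card_mono[OF finite_lessThan] by fastforce
    then show ?thesis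
      using True by (simp add: lower_raise_expand raise_lower_expand weight_mult_apply of_nat_diff
          algebra_simps)
  qed (simp add: weight_mult_apply lower_op_def raise_op_def)
qed

lemma raise_weight_mult:
  "raise_op n (weight_mult n h f) = (\<lambda>S. (if S = {} then 0 else h (card S - 1)) * raise_op n f S)"
proof
  fix S
  show "raise_op n (weight_mult n h f) S = (if S = {} then 0 else h (card S - 1)) * raise_op n f S"
  proof (cases "S \<subseteq> {..<n}")
    case True
    then have "finite S" using finite_subset by blast
    then have "raise_op n (weight_mult n h f) S = (\<Sum>i\<in>S. h (card S - 1) * f (S - {i}))"
      using True by (auto simp: raise_op_def weight_mult_def intro!: sum.cong)
    then show ?thesis using True by (auto simp: raise_op_def sum_distrib_left)
  qed (simp add: raise_op_def)
qed

lemma lower_weight_mult: "lower_op n (weight_mult n h f) = (\<lambda>S. h (Suc (card S)) * lower_op n f S)"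
proof
  fix S
  show "lower_op n (weight_mult n h f) S = h (Suc (card S)) * lower_op n f S"
  proof (cases "S \<subseteq> {..<n}")
    case True
    then have "finite S" using finite_subset by blast
    then have "lower_op n (weight_mult n h f) S =
        (\<Sum>j\<in>{..<n} - S. h (Suc (card S)) * f (insert j S))"
      using True by (auto simp: lower_op_def weight_mult_def intro!: sum.cong)
    then show ?thesis using True by (simp add: lower_op_def sum_distrib_left)
  qed (simp add: lower_op_def)
qed

lemma casimir_eig_Suc: "casimir_eig n (Suc s) = casimir_eig n s + (of_nat n - 2 * of_nat s)"
  unfolding casimir_eig_def by (simp add: algebra_simps)

lemma casimir_raise_commute: "casimir n (raise_op n f) = raise_op n (casimir n f)"
proof
  fix S
  show "casimir n (raise_op n f) S = raise_op n (casimir n f) S"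
  proof (cases "S \<subseteq> {..<n} \<and> S \<noteq> {}")
    case True
    then obtain s where s: "card S = Suc s"
      using finite_subset[of S "{..<n}"] by (cases "card S") auto
    have "casimir n (raise_op n f) S = casimir_eig n (Suc s) * raise_op n f S
        - raise_op n (raise_op n (lower_op n f)) S - (of_nat n - 2 * of_nat s) * raise_op n f S"
      unfolding casimir_def lower_raise_commutator qlinear_add[OF qlinear_raise_op]
        raise_weight_mult
      using True s by (simp add: weight_mult_apply algebra_simps)
    moreover have "raise_op n (casimir n f) S =
        casimir_eig n s * raise_op n f S - raise_op n (raise_op n (lower_op n f)) S"
      using True s by (simp add: casimir_def qlinear_diff[OF qlinear_raise_op] raise_weight_mult)
    ultimately show ?thesis by (simp add: casimir_eig_Suc algebra_simps) (metis add_right_cancel)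
  next
    case False
    then have "raise_op n g S = 0" for g by (auto simp: raise_op_def)
    then show ?thesis using False by (auto simp: casimir_def weight_mult_apply casimir_eig_def)
  qed
qed

lemma casimir_lower_commute: "casimir n (lower_op n f) = lower_op n (casimir n f)"
proof
  fix S
  have "lower_op n (casimir n f) S = casimir_eig n (Suc (card S)) * lower_op n f S
      - lower_op n (raise_op n (lower_op n f)) S"
    unfolding casimir_def by (simp add: qlinear_diff[OF qlinear_lower_op] lower_weight_mult)
  then show "casimir n (lower_op n f) S = lower_op n (casimir n f) S"
    by (cases "S \<subseteq> {..<n}")
      (simp_all add: casimir_def lower_raise_commutator weight_mult_def casimir_eig_Suc
        algebra_simps, simp add: lower_op_def)
qed

section \<open>Weight spaces and the spectrum of the Casimir operator\<close>

definition weight_space :: "nat \<Rightarrow> nat \<Rightarrow> qvec set" where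
  "weight_space n w = {f. is_qvec n f \<and> (\<forall>S. card S \<noteq> w \<longrightarrow> f S = 0)}"

lemma qsubspace_weight_space: "qsubspace (weight_space n w)"
  unfolding qsubspace_def weight_space_def is_qvec_def by simp

lemma weight_space_is_qvec: "f \<in> weight_space n w \<Longrightarrow> is_qvec n f"
  by (simp add: weight_space_def)

lemma raise_op_weight_space:
  assumes "f \<in> weight_space n w"
  shows "raise_op n f \<in> weight_space n (Suc w)"
proof -
  have "raise_op n f S = 0" if "card S \<noteq> Suc w" for S
  proof (cases "S \<subseteq> {..<n}")
    case True
    have "card (S - {i}) \<noteq> w" if "i \<in> S" for i
      using that \<open>card S \<noteq> Suc w\<close> finite_subset[OF True] card_gt_0_iff[of S]
      by (auto simp: card_Diff_singleton_if)
    then show ?thesis using assms True by (simp add: raise_op_def weight_space_def)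
  qed (simp add: raise_op_def)
  then show ?thesis by (simp add: weight_space_def is_qvec_raise_op)
qed

lemma lower_op_weight_space:
  assumes "f \<in> weight_space n (Suc w)"
  shows "lower_op n f \<in> weight_space n w"
proof -
  have "lower_op n f S = 0" if "card S \<noteq> w" for S
  proof (cases "S \<subseteq> {..<n}")
    case True
    have "card (insert j S) \<noteq> Suc w" if "j \<notin> S" for j
      using that \<open>card S \<noteq> w\<close> finite_subset[OF True] by simp
    then show ?thesis using assms True by (simp add: lower_op_def weight_space_def)
  qed (simp add: lower_op_def)
  then show ?thesis by (simp add: weight_space_def is_qvec_lower_op)
qed

lemma lower_op_weight_space_0:
  assumes "f \<in> weight_space n 0"
  shows "lower_op n f = (\<lambda>S. 0)"
proof
  fix S
  have "f (insert j S) = 0" if "S \<subseteq> {..<n}" for j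
  proof -
    have "card (insert j S) \<noteq> 0" using finite_subset[OF that] by simp
    then show ?thesis using assms by (simp add: weight_space_def)
  qed
  then show "lower_op n f S = 0" by (simp add: lower_op_def)
qed

lemma weight_space_above:
  assumes "f \<in> weight_space n w" "n < w"
  shows "f = (\<lambda>S. 0)"
proof
  fix S
  show "f S = 0"
  proof (cases "S \<subseteq> {..<n}")
    case True
    then have "card S \<le> n" using card_mono[OF finite_lessThan] by fastforce
    then show ?thesis using assms by (simp add: weight_space_def)
  qed (use assms in \<open>simp add: weight_space_def is_qvec_def\<close>)
qed

lemma weight_mult_weight_space: "f \<in> weight_space n w \<Longrightarrow> weight_mult n h f = (\<lambda>S. h w * f S)"
  by (auto simp: fun_eq_iff weight_mult_def weight_space_def is_qvec_def)

lemma casimir_weight_space: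
  "f \<in> weight_space n w \<Longrightarrow> casimir n f = (\<lambda>S. casimir_eig n w * f S - raise_op n (lower_op n f) S)"
  unfolding casimir_def by (simp add: weight_mult_weight_space)

lemma casimir_weight_space':
  assumes "f \<in> weight_space n w" "w \<le> n"
  shows "casimir n f = (\<lambda>S. casimir_eig n (n - w) * f S - lower_op n (raise_op n f) S)"
proof -
  have "casimir_eig n (n - w) = casimir_eig n w + (of_nat n - 2 * of_nat w)"
    using assms(2) by (simp add: casimir_eig_def of_nat_diff algebra_simps)
  then show ?thesis
    unfolding casimir_weight_space[OF assms(1)] lower_raise_commutator
      weight_mult_weight_space[OF assms(1)] \<open>casimir_eig n (n - w) = _\<close>
    by (simp add: algebra_simps)
qed

lemma casimir_weight_space_mem:
  assumes "f \<in> weight_space n w"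
  shows "casimir n f \<in> weight_space n w"
proof -
  have "raise_op n (lower_op n f) \<in> weight_space n w"
  proof (cases w)
    case 0
    then show ?thesis
      using assms lower_op_weight_space_0 qlinear_zero[OF qlinear_raise_op]
        qsubspace_zero[OF qsubspace_weight_space] by metis
  next
    case (Suc v)
    then show ?thesis using assms raise_op_weight_space lower_op_weight_space by simp
  qed
  then show ?thesis
    unfolding casimir_weight_space[OF assms]
    by (intro qsubspace_diff[OF qsubspace_weight_space]
        qsubspace_scale[OF qsubspace_weight_space] assms)
qed

lemma casimir_weight_space_image: "casimir n ` weight_space n w \<subseteq> weight_space n w"
  using casimir_weight_space_mem by blast

text \<open>On weight \<open>w\<close>, \<open>C - casimir_eig n w\<close> agrees with \<open>-raise_op \<circ> lower_op\<close>, and the remaining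
  factors annihilate the image of \<open>lower_op\<close> by induction, since they commute with \<open>raise_op\<close>.\<close>
lemma op_poly_casimir_lower_weights:
  assumes "f \<in> weight_space n w"
  shows "op_poly (casimir n) (map (casimir_eig n) [0..<Suc w]) f = (\<lambda>S. 0)"
  using assms
proof (induction w arbitrary: f)
  case 0
  then show ?case
    using casimir_weight_space[OF 0] lower_op_weight_space_0[OF 0]
    by (simp add: qlinear_zero[OF qlinear_raise_op] casimir_eig_def)
next
  case (Suc w)
  let ?p = "op_poly (casimir n) (map (casimir_eig n) [0..<Suc w])"
  have "op_poly (casimir n) [casimir_eig n (Suc w)] f = (\<lambda>S. - 1 * raise_op n (lower_op n f) S)"
    using casimir_weight_space[OF Suc.prems] by simp
  then have "op_poly (casimir n) (map (casimir_eig n) [0..<Suc (Suc w)]) f =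
      ?p (\<lambda>S. - 1 * raise_op n (lower_op n f) S)"
    by (simp only: upt_Suc_append[OF le0, of "Suc w"] map_append list.map op_poly_append)
  also have "\<dots> = (\<lambda>S. - 1 * raise_op n (?p (lower_op n f)) S)"
    by (simp only: qlinear_scale[OF qlinear_op_poly[OF qlinear_casimir]]
        op_poly_commute[where T = "casimir n", OF qlinear_raise_op casimir_raise_commute])
  also have "\<dots> = (\<lambda>S. 0)"
    using Suc.IH[OF lower_op_weight_space[OF Suc.prems]]
    by (simp add: qlinear_zero[OF qlinear_raise_op])
  finally show ?case .
qed

lemma op_poly_casimir_upper_weights:
  assumes "f \<in> weight_space n w" "w \<le> n"
  shows "op_poly (casimir n) (map (casimir_eig n) [0..<Suc (n - w)]) f = (\<lambda>S. 0)"
  using assms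
proof (induction "n - w" arbitrary: w f)
  case 0
  then have "raise_op n f = (\<lambda>S. 0)"
    using weight_space_above[OF raise_op_weight_space[OF 0(2)]] by simp
  then show ?case
    using casimir_weight_space'[OF 0(2,3)] 0(1)
    by (simp add: qlinear_zero[OF qlinear_lower_op] casimir_eig_def)
next
  case (Suc d)
  let ?p = "op_poly (casimir n) (map (casimir_eig n) [0..<Suc d])"
  have d: "d = n - Suc w" "n - w = Suc d" using Suc by auto
  have "op_poly (casimir n) [casimir_eig n (Suc d)] f = (\<lambda>S. - 1 * lower_op n (raise_op n f) S)"
    using casimir_weight_space'[OF Suc.prems] d(2) by simp
  then have "op_poly (casimir n) (map (casimir_eig n) [0..<Suc (n - w)]) f =
      ?p (\<lambda>S. - 1 * lower_op n (raise_op n f) S)"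
    by (simp only: d(2) upt_Suc_append[OF le0, of "Suc d"] map_append list.map op_poly_append)
  also have "\<dots> = (\<lambda>S. - 1 * lower_op n (?p (raise_op n f)) S)"
    by (simp only: qlinear_scale[OF qlinear_op_poly[OF qlinear_casimir]]
        op_poly_commute[where T = "casimir n", OF qlinear_lower_op casimir_lower_commute])
  also have "\<dots> = (\<lambda>S. 0)"
  proof -
    have "Suc w \<le> n" using Suc.hyps(2) by simp
    then have "?p (raise_op n f) = (\<lambda>S. 0)"
      unfolding d(1) by (rule Suc.hyps(1)[OF d(1) raise_op_weight_space[OF Suc.prems(1)]])
    then show ?thesis by (simp add: qlinear_zero[OF qlinear_lower_op])
  qed
  finally show ?case .
qed

lemma op_poly_casimir_weight_space:
  assumes "f \<in> weight_space n w" "w \<le> n"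
  shows "op_poly (casimir n) (map (casimir_eig n) [0..<Suc (min w (n - w))]) f = (\<lambda>S. 0)"
  using op_poly_casimir_lower_weights[OF assms(1)] op_poly_casimir_upper_weights[OF assms]
  by (cases "w \<le> n - w") (simp_all add: min_def)

lemma casimir_eig_diff:
  assumes "x + y \<le> n + 1"
  shows "casimir_eig n x - casimir_eig n y = (of_nat x - of_nat y) * of_nat (n + 1 - x - y)"
  using assms unfolding casimir_eig_def by (simp add: of_nat_diff algebra_simps)

lemma casimir_eig_neq:
  assumes "x \<noteq> y" "x + y \<le> n"
  shows "casimir_eig n x \<noteq> casimir_eig n y"
proof -
  have "casimir_eig n x - casimir_eig n y = (of_nat x - of_nat y) * of_nat (n + 1 - x - y)"
    using assms(2) by (intro casimir_eig_diff) simp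
  moreover have "(of_nat x - of_nat y :: complex) \<noteq> 0"
    using assms(1) by simp
  moreover have "n + 1 - x - y \<noteq> 0"
    using assms(2) by simp
  then have "of_nat (n + 1 - x - y) \<noteq> (0 :: complex)"
    by (simp only: of_nat_eq_0_iff not_False_eq_True)
  ultimately show ?thesis by (metis mult_eq_0_iff right_minus_eq)
qed

lemma casimir_eigenvector_eq_0:
  assumes "f \<in> weight_space n w" "casimir n f = (\<lambda>S. a * f S)"
    and "\<And>y. y \<le> w \<Longrightarrow> y \<le> n - w \<Longrightarrow> casimir_eig n y \<noteq> a"
  shows "f = (\<lambda>S. 0)"
proof (cases "w \<le> n")
  case True
  let ?cs = "map (casimir_eig n) [0..<Suc (min w (n - w))]"
  have "(\<Prod>c\<leftarrow>?cs. a - c) \<noteq> 0"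
  proof
    assume "(\<Prod>c\<leftarrow>?cs. a - c) = 0"
    then obtain y where "y < Suc (min w (n - w))" "a - casimir_eig n y = 0"
      unfolding prod_list_zero_iff by (auto simp del: upt_Suc)
    then show False using assms(3)[of y] by (simp add: less_Suc_eq_le)
  qed
  moreover have "(\<lambda>S. (\<Prod>c\<leftarrow>?cs. a - c) * f S) = (\<lambda>S. 0)"
    using op_poly_casimir_weight_space[OF assms(1) True]
      op_poly_eigenvector[OF qlinear_casimir assms(2)] by simp
  ultimately show ?thesis by (simp add: fun_eq_iff)
qed (use weight_space_above[OF assms(1)] in simp)

lemma casimir_eigen_decomposition:
  assumes "f \<in> weight_space n w" "w \<le> n"
  shows "\<exists>g. (\<forall>x. g x \<in> weight_space n w \<and> casimir n (g x) = (\<lambda>S. casimir_eig n x * g x S))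
    \<and> f = (\<lambda>S. \<Sum>x\<le>n div 2. g x S)"
proof -
  let ?r = "min w (n - w)"
  have "?r \<le> n div 2" by linarith
  have inj: "inj_on (casimir_eig n) {0..<Suc ?r}"
  proof (rule inj_onI)
    fix x y assume "x \<in> {0..<Suc ?r}" "y \<in> {0..<Suc ?r}" "casimir_eig n x = casimir_eig n y"
    then show "x = y" using casimir_eig_neq[of x y n] by fastforce
  qed
  then have "distinct (map (casimir_eig n) [0..<Suc ?r])"
    by (simp add: distinct_map del: upt_Suc)
  then obtain g where g: "\<forall>c. g c \<in> weight_space n w \<and> casimir n (g c) = (\<lambda>S. c * g c S)"
    "f = (\<lambda>S. \<Sum>c\<in>set (map (casimir_eig n) [0..<Suc ?r]). g c S)"
    using eigen_decomposition[OF qlinear_casimir qsubspace_weight_space casimir_weight_space_image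
        _ assms(1) op_poly_casimir_weight_space[OF assms]] by blast
  define h where "h x = (if x \<le> ?r then g (casimir_eig n x) else (\<lambda>S. 0))" for x
  have "f = (\<lambda>S. \<Sum>x\<le>n div 2. h x S)"
  proof
    fix S
    have "f S = (\<Sum>x\<in>{0..<Suc ?r}. g (casimir_eig n x) S)"
      using g(2) by (simp add: sum.reindex[OF inj] del: upt_Suc)
    also have "\<dots> = (\<Sum>x\<le>n div 2. h x S)"
      by (rule sum.mono_neutral_cong_left) (use \<open>?r \<le> n div 2\<close> in \<open>auto simp: h_def\<close>)
    finally show "f S = (\<Sum>x\<le>n div 2. h x S)" .
  qed
  moreover have "h x \<in> weight_space n w \<and> casimir n (h x) = (\<lambda>S. casimir_eig n x * h x S)" for x
    using g(1)
    by (simp add: h_def qsubspace_zero[OF qsubspace_weight_space] qlinear_zero[OF qlinear_casimir])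
  ultimately show ?thesis by blast
qed

section \<open>Polytabloids and highest weight vectors\<close>

definition add_elem :: "nat \<Rightarrow> qvec \<Rightarrow> qvec" where
  "add_elem c g = (\<lambda>S. if c \<in> S then g (S - {c}) else 0)"

definition avoids :: "nat \<Rightarrow> qvec \<Rightarrow> bool" where
  "avoids c g \<longleftrightarrow> (\<forall>S. g S \<noteq> 0 \<longrightarrow> c \<notin> S)"

lemma polytabloid_0: "polytabloid 0 a b = (\<lambda>S. if S = {} then 1 else 0)"
  by (simp add: polytabloid_def fun_eq_iff)

lemma polytabloid_support:
  assumes "polytabloid x a b S \<noteq> 0"
  obtains C where "C \<subseteq> {..<x}" "S = b ` ({..<x} - C) \<union> a ` C"
proof -
  have "\<exists>C. C \<subseteq> {..<x} \<and> S = b ` ({..<x} - C) \<union> a ` C"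
  proof (rule ccontr)
    assume "\<nexists>C. C \<subseteq> {..<x} \<and> S = b ` ({..<x} - C) \<union> a ` C"
    then have "polytabloid x a b S = 0" unfolding polytabloid_def by (auto intro!: sum.neutral)
    then show False using assms by simp
  qed
  then show ?thesis using that by blast
qed

lemma polytabloid_subset:
  "polytabloid x a b S \<noteq> 0 \<Longrightarrow> S \<subseteq> a ` {..<x} \<union> b ` {..<x}"
  by (erule polytabloid_support) auto

lemma avoids_polytabloid:
  "c \<notin> a ` {..<x} \<union> b ` {..<x} \<Longrightarrow> avoids c (polytabloid x a b)"
  unfolding avoids_def using polytabloid_subset by blast

lemma polytabloid_card:
  assumes "is_tableau_cols n x a b" "polytabloid x a b S \<noteq> 0"
  shows "card S = x"
proof -
  obtain C where C: "C \<subseteq> {..<x}" "S = b ` ({..<x} - C) \<union> a ` C"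
    using polytabloid_support[OF assms(2)] .
  have inj: "inj_on a C" "inj_on b ({..<x} - C)"
    using assms(1) C(1) unfolding is_tableau_cols_def by (auto intro: inj_on_subset)
  have disj: "b ` ({..<x} - C) \<inter> a ` C = {}"
    using assms(1) C(1) unfolding is_tableau_cols_def by blast
  have "finite C" using C(1) finite_subset by blast
  have "card S = card (b ` ({..<x} - C)) + card (a ` C)"
    unfolding C(2) by (rule card_Un_disjoint) (use \<open>finite C\<close> disj in auto)
  also have "\<dots> = (x - card C) + card C"
    using C(1) \<open>finite C\<close>
    by (simp add: card_image[OF inj(1)] card_image[OF inj(2)] card_Diff_subset)
  also have "\<dots> = x" using card_mono[OF _ C(1)] by simp
  finally show ?thesis .
qed

lemma polytabloid_weight_space:
  assumes "is_tableau_cols n x a b"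
  shows "polytabloid x a b \<in> weight_space n x"
proof -
  have "a ` {..<x} \<union> b ` {..<x} \<subseteq> {..<n}" using assms unfolding is_tableau_cols_def by blast
  then have "is_qvec n (polytabloid x a b)"
    unfolding is_qvec_def using polytabloid_subset[of x a b] by (meson order_trans)
  then show ?thesis using polytabloid_card[OF assms] by (auto simp: weight_space_def)
qed

lemma tableau_cols_Suc:
  assumes "is_tableau_cols n (Suc x) a b"
  shows "is_tableau_cols n x a b" "a x \<notin> a ` {..<x} \<union> b ` {..<x}"
    "b x \<notin> a ` {..<x} \<union> b ` {..<x}" "a x < n" "b x < n"
proof -
  have "inj_on a (insert x {..<x})" "inj_on b (insert x {..<x})"
    "a ` insert x {..<x} \<inter> b ` insert x {..<x} = {}"
    "a ` insert x {..<x} \<subseteq> {..<n}" "b ` insert x {..<x} \<subseteq> {..<n}"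
    using assms unfolding is_tableau_cols_def lessThan_Suc by auto
  then show "is_tableau_cols n x a b" "a x \<notin> a ` {..<x} \<union> b ` {..<x}"
    "b x \<notin> a ` {..<x} \<union> b ` {..<x}" "a x < n" "b x < n"
    unfolding is_tableau_cols_def by (auto intro: inj_on_subset)
qed

lemma tableau_cols_mono: "is_tableau_cols m x a b \<Longrightarrow> m \<le> n \<Longrightarrow> is_tableau_cols n x a b"
  unfolding is_tableau_cols_def by auto

text \<open>The polytabloid is the product over the columns \<open>(a i, b i)\<close> of \<open>e\<^bsub>b i\<^esub> - e\<^bsub>a i\<^esub>\<close>.\<close>
lemma polytabloid_Suc:
  assumes "is_tableau_cols n (Suc x) a b"
  shows "polytabloid (Suc x) a b =
    (\<lambda>S. add_elem (b x) (polytabloid x a b) S - add_elem (a x) (polytabloid x a b) S)"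
proof
  fix S
  note t = tableau_cols_Suc[OF assms]
  define R where "R C = b ` ({..<x} - C) \<union> a ` C" for C
  have notin_R: "a x \<notin> R C" "b x \<notin> R C" if "C \<subseteq> {..<x}" for C
    using that t(2,3) unfolding R_def by auto
  let ?t = "\<lambda>C. (-1::complex) ^ card C * (if S = b ` ({..<Suc x} - C) \<union> a ` C then 1 else 0)"
  have "Pow {..<Suc x} = Pow {..<x} \<union> insert x ` Pow {..<x}"
    by (simp add: lessThan_Suc Pow_insert)
  then have "polytabloid (Suc x) a b S = (\<Sum>C\<in>Pow {..<x} \<union> insert x ` Pow {..<x}. ?t C)"
    unfolding polytabloid_def by simp
  also have "\<dots> = (\<Sum>C\<in>Pow {..<x}. ?t C) + (\<Sum>C\<in>insert x ` Pow {..<x}. ?t C)"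
    by (rule sum.union_disjoint) auto
  also have "(\<Sum>C\<in>insert x ` Pow {..<x}. ?t C) = (\<Sum>C\<in>Pow {..<x}. ?t (insert x C))"
    by (rule sum.reindex_cong[of "insert x"]) (auto simp: inj_on_def)
  finally have "polytabloid (Suc x) a b S =
      (\<Sum>C\<in>Pow {..<x}. ?t C) + (\<Sum>C\<in>Pow {..<x}. ?t (insert x C))" .
  moreover have "?t C = (if b x \<in> S then (-1) ^ card C * (if S - {b x} = R C then 1 else 0) else 0)"
    if "C \<in> Pow {..<x}" for C
  proof -
    have "b ` ({..<Suc x} - C) \<union> a ` C = insert (b x) (R C)"
      using that unfolding R_def lessThan_Suc by auto
    then show ?thesis using notin_R(2)[of C] that by auto
  qed
  moreover have "?t (insert x C) =
      - (if a x \<in> S then (-1) ^ card C * (if S - {a x} = R C then 1 else 0) else 0)"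
    if "C \<in> Pow {..<x}" for C
  proof -
    have "b ` ({..<Suc x} - insert x C) \<union> a ` (insert x C) = insert (a x) (R C)"
      using that unfolding R_def lessThan_Suc by auto
    moreover have "finite C" "x \<notin> C" using that finite_subset by auto
    ultimately show ?thesis using notin_R(1)[of C] that by auto
  qed
  ultimately show "polytabloid (Suc x) a b S =
      add_elem (b x) (polytabloid x a b) S - add_elem (a x) (polytabloid x a b) S"
    unfolding add_elem_def polytabloid_def R_def by (simp add: sum_negf)
qed

lemma lower_op_add_elem:
  assumes "c < n" "avoids c g"
  shows "lower_op n (add_elem c g) =
    (\<lambda>T. add_elem c (lower_op n g) T + (if T \<subseteq> {..<n} \<and> c \<notin> T then g T else 0))"
proof
  fix T
  show "lower_op n (add_elem c g) T =
      add_elem c (lower_op n g) T + (if T \<subseteq> {..<n} \<and> c \<notin> T then g T else 0)"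
  proof (cases "T \<subseteq> {..<n}")
    case False
    then have "\<not> T - {c} \<subseteq> {..<n}" using assms(1) by auto
    then show ?thesis using False by (simp add: lower_op_def add_elem_def)
  next
    case True
    show ?thesis
    proof (cases "c \<in> T")
      case True
      have "g T = 0" using assms(2) True unfolding avoids_def by blast
      moreover have "{..<n} - (T - {c}) = insert c ({..<n} - T)" using True \<open>T \<subseteq> {..<n}\<close> by auto
      moreover have "lower_op n (add_elem c g) T = (\<Sum>j\<in>{..<n} - T. g (insert j (T - {c})))"
        using True \<open>T \<subseteq> {..<n}\<close>
        by (auto simp: lower_op_def add_elem_def intro!: sum.cong arg_cong[where f=g])
      ultimately show ?thesis
        using True \<open>T \<subseteq> {..<n}\<close> finite_subset[OF \<open>T \<subseteq> {..<n}\<close>]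
        by (simp add: add_elem_def lower_op_def insert_absorb subset_iff)
    next
      case False
      have "lower_op n (add_elem c g) T = (\<Sum>j\<in>{..<n} - T. if j = c then g T else 0)"
        using True False by (auto simp: lower_op_def add_elem_def intro!: sum.cong)
      then show ?thesis using True False assms(1) by (simp add: add_elem_def)
    qed
  qed
qed

lemma lower_op_polytabloid:
  assumes "is_tableau_cols n x a b"
  shows "lower_op n (polytabloid x a b) = (\<lambda>S. 0)"
  using assms
proof (induction x)
  case 0
  show ?case unfolding polytabloid_0 by (auto simp: lower_op_def fun_eq_iff intro!: sum.neutral)
next
  case (Suc x)
  note t = tableau_cols_Suc[OF Suc.prems]
  have "avoids (a x) (polytabloid x a b)" "avoids (b x) (polytabloid x a b)"
    using t(2,3) by (simp_all add: avoids_polytabloid)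
  then have "(if T \<subseteq> {..<n} \<and> b x \<notin> T then polytabloid x a b T else 0) =
      (if T \<subseteq> {..<n} \<and> a x \<notin> T then polytabloid x a b T else 0)" for T
    unfolding avoids_def by auto
  then show ?case
    unfolding polytabloid_Suc[OF Suc.prems] qlinear_diff[OF qlinear_lower_op]
      lower_op_add_elem[OF t(4) \<open>avoids (a x) _\<close>] lower_op_add_elem[OF t(5) \<open>avoids (b x) _\<close>]
      Suc.IH[OF t(1)]
    by (simp add: add_elem_def)
qed

lemma qsubspace_specht: "qsubspace (specht n x)"
  unfolding specht_def by (rule qsubspace_cspan)

lemma polytabloid_in_specht: "is_tableau_cols n x a b \<Longrightarrow> polytabloid x a b \<in> specht n x"
  unfolding specht_def by (rule cspan_base) blast

lemma specht_mono: "m \<le> n \<Longrightarrow> specht m x \<subseteq> specht n x"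
  unfolding specht_def by (rule cspan_mono) (use tableau_cols_mono in blast)

lemma specht_highest_weight:
  assumes "f \<in> specht n x"
  shows "f \<in> weight_space n x \<and> lower_op n f = (\<lambda>S. 0)"
  using assms unfolding specht_def
proof (rule cspan_closed)
  show "(\<lambda>S. 0) \<in> weight_space n x \<and> lower_op n (\<lambda>S. 0) = (\<lambda>S. 0)"
    by (simp add: qsubspace_zero[OF qsubspace_weight_space] qlinear_zero[OF qlinear_lower_op])
next
  fix g h
  assume "g \<in> weight_space n x \<and> lower_op n g = (\<lambda>S. 0)"
    "h \<in> weight_space n x \<and> lower_op n h = (\<lambda>S. 0)"
  then show "(\<lambda>S. g S + h S) \<in> weight_space n x \<and> lower_op n (\<lambda>S. g S + h S) = (\<lambda>S. 0)"
    by (simp add: qsubspace_add[OF qsubspace_weight_space] qlinear_add[OF qlinear_lower_op])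
next
  fix g c
  assume "g \<in> weight_space n x \<and> lower_op n g = (\<lambda>S. 0)"
  then show "(\<lambda>S. c * g S) \<in> weight_space n x \<and> lower_op n (\<lambda>S. c * g S) = (\<lambda>S. 0)"
    by (simp add: qsubspace_scale[OF qsubspace_weight_space] qlinear_scale[OF qlinear_lower_op])
qed (use polytabloid_weight_space lower_op_polytabloid in blast)

lemma weight_space_0_in_specht:
  assumes "f \<in> weight_space n 0"
  shows "f \<in> specht n 0"
proof -
  have "f S = 0" if "S \<noteq> {}" for S
  proof (cases "S \<subseteq> {..<n}")
    case True
    then have "card S \<noteq> 0" using that finite_subset[OF True] by simp
    then show ?thesis using assms by (simp add: weight_space_def)
  qed (use assms in \<open>simp add: weight_space_def is_qvec_def\<close>)
  then have "f S = f {} * polytabloid 0 id id S" for S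
    by (cases "S = {}") (simp_all add: polytabloid_0)
  moreover have "polytabloid 0 id id \<in> specht n 0"
    by (rule polytabloid_in_specht) (simp add: is_tableau_cols_def)
  ultimately show ?thesis using qsubspace_scale[OF qsubspace_specht] by (metis ext)
qed

lemma tableau_cols_extend:
  assumes "is_tableau_cols N y a b" "j < N" "j \<notin> a ` {..<y} \<union> b ` {..<y}"
  shows "is_tableau_cols (Suc N) (Suc y) (a(y := j)) (b(y := N))"
proof -
  have "(a(y := j)) ` {..<y} = a ` {..<y}" "(b(y := N)) ` {..<y} = b ` {..<y}" by auto
  moreover have "N \<notin> a ` {..<y} \<union> b ` {..<y}"
    using assms(1) unfolding is_tableau_cols_def by auto
  moreover have "inj_on (a(y := j)) {..<y}" "inj_on (b(y := N)) {..<y}"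
    using assms(1) unfolding is_tableau_cols_def by (auto simp: inj_on_def)
  ultimately show ?thesis
    using assms unfolding is_tableau_cols_def lessThan_Suc by auto
qed

lemma polytabloid_extend:
  assumes "is_tableau_cols N y a b" "j < N" "j \<notin> a ` {..<y} \<union> b ` {..<y}" "N \<in> S"
  shows "polytabloid (Suc y) (a(y := j)) (b(y := N)) S = polytabloid y a b (S - {N})"
proof -
  have "polytabloid y (a(y := j)) (b(y := N)) = polytabloid y a b"
    unfolding polytabloid_def by (intro ext sum.cong refl arg_cong2[where f = "(*)"]) auto
  moreover have "avoids N (polytabloid y a b)"
    using assms(1) by (intro avoids_polytabloid) (auto simp: is_tableau_cols_def)
  then have "add_elem j (polytabloid y a b) S = 0"
    using assms(2,4) unfolding add_elem_def avoids_def by auto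
  ultimately show ?thesis
    using polytabloid_Suc[OF tableau_cols_extend[OF assms(1-3)]] assms(4)
    by (simp add: add_elem_def)
qed

lemma specht_extend:
  assumes "q \<in> specht N y" "2 * y < N"
  shows "\<exists>g\<in>specht (Suc N) (Suc y). \<forall>S. N \<in> S \<longrightarrow> g S = q (S - {N})"
proof -
  define P where "P q \<longleftrightarrow> (\<exists>g\<in>specht (Suc N) (Suc y). \<forall>S. N \<in> S \<longrightarrow> g S = q (S - {N}))" for q
  have "P q"
    using assms(1) unfolding specht_def
  proof (rule cspan_closed)
    fix v assume "v \<in> {polytabloid y a b |a b. is_tableau_cols N y a b}"
    then obtain a b where v: "v = polytabloid y a b" and t: "is_tableau_cols N y a b" by blast
    let ?X = "a ` {..<y} \<union> b ` {..<y}"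
    have "card ?X \<le> y + y"
      using card_Un_le[of "a ` {..<y}" "b ` {..<y}"] card_image_le[of "{..<y}" a]
        card_image_le[of "{..<y}" b]
      by simp
    then have "\<not> {..<N} \<subseteq> ?X" using assms(2) card_mono[of ?X "{..<N}"] by auto
    then obtain j where "j < N" "j \<notin> ?X" by blast
    then show "P v"
      unfolding P_def v
      using polytabloid_extend[OF t] polytabloid_in_specht[OF tableau_cols_extend[OF t]] by blast
  next
    show "P (\<lambda>S. 0)"
      unfolding P_def by (rule bexI[OF _ qsubspace_zero[OF qsubspace_specht]]) simp
  next
    fix g h assume "P g" "P h"
    then obtain g' h' where "g' \<in> specht (Suc N) (Suc y)" "\<forall>S. N \<in> S \<longrightarrow> g' S = g (S - {N})"
      "h' \<in> specht (Suc N) (Suc y)" "\<forall>S. N \<in> S \<longrightarrow> h' S = h (S - {N})"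
      unfolding P_def by blast
    then show "P (\<lambda>S. g S + h S)"
      unfolding P_def
      by (intro bexI[of _ "\<lambda>S. g' S + h' S"] qsubspace_add[OF qsubspace_specht]) auto
  next
    fix g c assume "P g"
    then obtain g' where "g' \<in> specht (Suc N) (Suc y)" "\<forall>S. N \<in> S \<longrightarrow> g' S = g (S - {N})"
      unfolding P_def by blast
    then show "P (\<lambda>S. c * g S)"
      unfolding P_def by (intro bexI[of _ "\<lambda>S. c * g' S"] qsubspace_scale[OF qsubspace_specht]) auto
  qed
  then show ?thesis unfolding P_def .
qed

definition top_slice :: "nat \<Rightarrow> qvec \<Rightarrow> qvec" where
  "top_slice N f = (\<lambda>T. if T \<subseteq> {..<N} then f (insert N T) else 0)"

lemma top_slice_weight_space:
  assumes "f \<in> weight_space (Suc N) (Suc y)"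
  shows "top_slice N f \<in> weight_space N y"
proof -
  have "f (insert N T) = 0" if "T \<subseteq> {..<N}" "card T \<noteq> y" for T
  proof -
    have "card (insert N T) \<noteq> Suc y"
      using that finite_subset[OF that(1)] by (subst card_insert_disjoint) auto
    then show ?thesis using assms by (simp add: weight_space_def)
  qed
  then show ?thesis by (auto simp: weight_space_def is_qvec_def top_slice_def)
qed

lemma lower_op_top_slice:
  assumes "lower_op (Suc N) f = (\<lambda>S. 0)"
  shows "lower_op N (top_slice N f) = (\<lambda>S. 0)"
proof
  fix T
  show "lower_op N (top_slice N f) T = 0"
  proof (cases "T \<subseteq> {..<N}")
    case True
    have "{..<Suc N} - insert N T = {..<N} - T" "insert N T \<subseteq> {..<Suc N}" using True by auto
    then have "lower_op (Suc N) f (insert N T) = (\<Sum>j\<in>{..<N} - T. f (insert j (insert N T)))"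
      using True by (simp add: lower_op_def)
    moreover have "lower_op N (top_slice N f) T = (\<Sum>j\<in>{..<N} - T. f (insert N (insert j T)))"
      using True by (auto simp: lower_op_def top_slice_def intro!: sum.cong)
    ultimately show ?thesis using assms by (simp add: insert_commute)
  qed (simp add: lower_op_def)
qed

lemma weight_space_restrict_Suc:
  assumes "f \<in> weight_space (Suc N) x" "\<And>S. N \<in> S \<Longrightarrow> f S = 0"
  shows "f \<in> weight_space N x"
proof -
  have "f S = 0" if "\<not> S \<subseteq> {..<N}" for S
  proof (cases "N \<in> S")
    case False
    then have "\<not> S \<subseteq> {..<Suc N}" using that by (auto simp: subset_iff less_Suc_eq)
    then show ?thesis using assms(1) by (simp add: weight_space_def is_qvec_def)
  qed (use assms(2) in simp)
  then show ?thesis using assms(1) by (simp add: weight_space_def is_qvec_def)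
qed

lemma lower_op_restrict_Suc:
  assumes "lower_op (Suc N) f = (\<lambda>S. 0)" "\<And>S. N \<in> S \<Longrightarrow> f S = 0"
  shows "lower_op N f = (\<lambda>S. 0)"
proof
  fix T
  show "lower_op N f T = 0"
  proof (cases "T \<subseteq> {..<N}")
    case True
    have "{..<Suc N} - T = insert N ({..<N} - T)" using True by auto
    then have "lower_op (Suc N) f T = f (insert N T) + lower_op N f T"
      using True by (simp add: lower_op_def subset_iff less_Suc_eq)
    then show ?thesis using assms by simp
  qed (simp add: lower_op_def)
qed

lemma top_slice_agree:
  assumes "is_qvec (Suc N) f" "is_qvec (Suc N) g" "\<And>S. N \<in> S \<Longrightarrow> g S = top_slice N f (S - {N})"
    and "N \<in> S"
  shows "g S = f S"
proof (cases "S \<subseteq> {..<Suc N}")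
  case True
  then have "S - {N} \<subseteq> {..<N}" by auto
  then show ?thesis using assms(3,4) by (simp add: top_slice_def insert_absorb)
qed (use assms(1,2) in \<open>simp add: is_qvec_def\<close>)

lemma highest_weight_above_half:
  assumes "n < 2 * x" "f \<in> weight_space n x" "lower_op n f = (\<lambda>S. 0)"
  shows "f = (\<lambda>S. 0)"
proof (cases "x \<le> n")
  case True
  show ?thesis
  proof (rule casimir_eigenvector_eq_0[OF assms(2), where a = "casimir_eig n x"])
    show "casimir n f = (\<lambda>S. casimir_eig n x * f S)"
      using casimir_weight_space[OF assms(2)] assms(3)
      by (simp add: qlinear_zero[OF qlinear_raise_op])
    fix y assume "y \<le> x" "y \<le> n - x"
    then show "casimir_eig n y \<noteq> casimir_eig n x" using assms(1) True
      by (intro casimir_eig_neq) auto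
  qed
qed (use weight_space_above[OF assms(2)] in simp)

text \<open>By induction on \<open>n\<close>: the part of \<open>f\<close> with a \<open>1\<close> in the last position is a highest
  weight vector for \<open>n - 1\<close> letters, hence in a Specht module, and it extends to an element \<open>g\<close>
  of \<open>specht n x\<close>. The difference \<open>f - g\<close> is a highest weight vector for \<open>n - 1\<close> letters.\<close>
lemma highest_weight_in_specht:
  assumes "2 * x \<le> n" "f \<in> weight_space n x" "lower_op n f = (\<lambda>S. 0)"
  shows "f \<in> specht n x"
  using assms
proof (induction n arbitrary: x f)
  case 0
  then show ?case using weight_space_0_in_specht by simp
next
  case (Suc N)
  show ?case
  proof (cases x)
    case 0
    then show ?thesis using weight_space_0_in_specht Suc.prems by simp
  next
    case (Suc y)
    have "top_slice N f \<in> specht N y"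
      using Suc.IH top_slice_weight_space lower_op_top_slice Suc.prems \<open>x = Suc y\<close> by simp
    then obtain g where g: "g \<in> specht (Suc N) x" "\<And>S. N \<in> S \<Longrightarrow> g S = top_slice N f (S - {N})"
      using specht_extend[of _ N y] Suc.prems(1) \<open>x = Suc y\<close> by auto
    have g_hw: "g \<in> weight_space (Suc N) x" "lower_op (Suc N) g = (\<lambda>S. 0)"
      using specht_highest_weight[OF g(1)] by simp_all
    define r where "r = (\<lambda>S. f S - g S)"
    have "r S = 0" if "N \<in> S" for S
      using top_slice_agree[OF _ _ g(2) that] Suc.prems(2) g_hw(1)
      by (simp add: r_def weight_space_def)
    moreover have "r \<in> weight_space (Suc N) x" "lower_op (Suc N) r = (\<lambda>S. 0)"
      using qsubspace_diff[OF qsubspace_weight_space Suc.prems(2) g_hw(1)] Suc.prems(3) g_hw(2)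
      by (simp_all add: r_def qlinear_diff[OF qlinear_lower_op])
    ultimately have r: "r \<in> weight_space N x" "lower_op N r = (\<lambda>S. 0)"
      using weight_space_restrict_Suc lower_op_restrict_Suc by blast+
    have "r \<in> specht (Suc N) x"
    proof (cases "2 * x \<le> N")
      case True
      then show ?thesis using Suc.IH[OF True r] specht_mono[of N "Suc N" x] by auto
    qed (use highest_weight_above_half[OF _ r] qsubspace_zero[OF qsubspace_specht] in auto)
    then have "(\<lambda>S. r S + g S) \<in> specht (Suc N) x"
      by (rule qsubspace_add[OF qsubspace_specht _ g(1)])
    then show ?thesis by (simp add: r_def)
  qed
qed

section \<open>The symmetric group action\<close>

lemma permutes_image_subset_lessThan_iff:
  assumes "\<sigma> permutes {..<n}"
  shows "\<sigma> ` S \<subseteq> {..<n} \<longleftrightarrow> S \<subseteq> {..<n}"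
  using permutes_in_image[OF assms] by auto

lemma bij_inv_image_eq_iff:
  assumes "bij \<sigma>"
  shows "inv \<sigma> ` S = X \<longleftrightarrow> S = \<sigma> ` X"
  using image_f_inv_f[OF bij_is_surj[OF assms]] image_inv_f_f[OF bij_is_inj[OF assms]] by metis

lemma raise_op_pact:
  assumes "\<sigma> permutes {..<n}"
  shows "raise_op n (pact \<sigma> f) = pact \<sigma> (raise_op n f)"
proof
  fix S
  have \<tau>: "inv \<sigma> permutes {..<n}" by (rule permutes_inv[OF assms])
  then have inj: "inj (inv \<sigma>)" by (rule permutes_inj)
  show "raise_op n (pact \<sigma> f) S = pact \<sigma> (raise_op n f) S"
  proof (cases "S \<subseteq> {..<n}")
    case True
    then have "pact \<sigma> (raise_op n f) S = (\<Sum>j\<in>inv \<sigma> ` S. f (inv \<sigma> ` S - {j}))"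
      using permutes_image_subset_lessThan_iff[OF \<tau>] by (simp add: pact_def raise_op_def)
    also have "\<dots> = (\<Sum>i\<in>S. f (inv \<sigma> ` (S - {i})))"
      by (simp add: sum.reindex[OF inj_on_subset[OF inj]] image_set_diff[OF inj])
    finally show ?thesis using True by (simp add: pact_def raise_op_def)
  next
    case False
    then show ?thesis
      using permutes_image_subset_lessThan_iff[OF \<tau>] by (simp add: pact_def raise_op_def)
  qed
qed

lemma equiv_map_raise_op_pow: "equiv_map n x (raise_op n ^^ r)"
proof -
  have "is_qvec n ((raise_op n ^^ r) f)" if "f \<in> specht n x" for f
    using specht_highest_weight[OF that] by (cases r) (auto simp: is_qvec_raise_op weight_space_def)
  moreover have "(raise_op n ^^ r) (pact \<sigma> f) = pact \<sigma> ((raise_op n ^^ r) f)"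
    if "\<sigma> permutes {..<n}" for \<sigma> f
    by (induction r) (simp_all add: raise_op_pact[OF that])
  ultimately show ?thesis
    unfolding equiv_map_def
    using qlinear_add[OF qlinear_funpow[OF qlinear_raise_op]]
      qlinear_scale[OF qlinear_funpow[OF qlinear_raise_op]]
    by blast
qed

lemma transpose_image_in_out:
  assumes "i \<in> S" "j \<notin> S"
  shows "transpose i j ` S = insert j (S - {i})"
  using assms by (auto simp: in_transpose_image_iff Transposition.transpose_def)

text \<open>Only transpositions exchanging an element of \<open>S\<close> with one outside \<open>S\<close> move \<open>S\<close>, and each
  such pair is counted twice.\<close>
lemma sum_transpositions:
  fixes g :: "nat set \<Rightarrow> complex"
  assumes S: "S \<subseteq> {..<n}"
  shows "(\<Sum>i<n. \<Sum>j<n. g S - g (transpose i j ` S)) =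
    2 * (\<Sum>i\<in>S. \<Sum>j\<in>{..<n} - S. g S - g (insert j (S - {i})))"
proof -
  define h where "h i j = g S - g (transpose i j ` S)" for i j
  have h0: "h i j = 0" if "i \<in> S \<longleftrightarrow> j \<in> S" for i j
    using that unfolding h_def by simp
  have split: "(\<Sum>i<n. F i) = (\<Sum>i\<in>S. F i) + (\<Sum>i\<in>{..<n} - S. F i)" for F :: "nat \<Rightarrow> complex"
    using sum.subset_diff[OF S, of F] by simp
  have "(\<Sum>i<n. \<Sum>j<n. h i j) =
      (\<Sum>i\<in>S. \<Sum>j\<in>{..<n} - S. h i j) + (\<Sum>i\<in>{..<n} - S. \<Sum>j\<in>S. h i j)"
    using split[of "\<lambda>i. \<Sum>j<n. h i j"] split[of "h _"] h0 by simp
  also have "(\<Sum>i\<in>{..<n} - S. \<Sum>j\<in>S. h i j) = (\<Sum>i\<in>S. \<Sum>j\<in>{..<n} - S. h i j)"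
    by (subst sum.swap) (simp add: h_def transpose_commute)
  finally show ?thesis
    unfolding h_def by (simp add: transpose_image_in_out)
qed

lemma casimir_apply_transpositions:
  assumes "is_qvec n g"
  shows "casimir n g S = (1/2) * (\<Sum>i<n. \<Sum>j<n. g S - g (transpose i j ` S))"
proof (cases "S \<subseteq> {..<n}")
  case True
  then have "card S \<le> n" "finite S"
    using card_mono[OF finite_lessThan True] finite_subset[OF True] by simp_all
  let ?\<Sigma> = "\<Sum>i\<in>S. \<Sum>j\<in>{..<n} - S. g (insert j (S - {i}))"
  have "(\<Sum>i<n. \<Sum>j<n. g S - g (transpose i j ` S)) =
      2 * (of_nat (card S) * of_nat (n - card S) * g S - ?\<Sigma>)"
    unfolding sum_transpositions[OF True]
    using True \<open>finite S\<close> by (simp add: sum_subtractf card_Diff_subset)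
  moreover have "casimir n g S = of_nat (card S) * of_nat (n - card S) * g S - ?\<Sigma>"
    using True \<open>card S \<le> n\<close> by (simp add: casimir_def weight_mult_apply raise_lower_expand
        casimir_eig_def of_nat_diff algebra_simps)
  ultimately show ?thesis by simp
next
  case False
  moreover have "\<not> transpose i j ` S \<subseteq> {..<n}" if "i < n" "j < n" for i j
    using False permutes_image_subset_lessThan_iff[OF permutes_swap_id, of i n j] that by simp
  ultimately show ?thesis
    using assms by (simp add: casimir_def weight_mult_apply raise_op_def is_qvec_def)
qed

text \<open>This exhibits the Casimir operator as a central element of the group algebra of the
  symmetric group, so it commutes with equivariant maps.\<close>
lemma casimir_transpositions:
  assumes "is_qvec n g"
  shows "casimir n g =
    (\<lambda>S. \<Sum>p\<in>{..<n} \<times> {..<n}. (1/2) * (g S - pact (transpose (fst p) (snd p)) g S))"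
  unfolding casimir_apply_transpositions[OF assms]
  by (simp add: sum_distrib_left sum.cartesian_product case_prod_beta pact_def)

lemma tableau_cols_permute:
  assumes "\<sigma> permutes {..<n}" "is_tableau_cols n x a b"
  shows "is_tableau_cols n x (\<sigma> \<circ> a) (\<sigma> \<circ> b)"
proof -
  have "inj \<sigma>" "\<forall>i<n. \<sigma> i < n"
    using permutes_inj[OF assms(1)] permutes_in_image[OF assms(1)] by simp_all
  then show ?thesis
    using assms(2) unfolding is_tableau_cols_def image_comp[symmetric]
    by (auto simp: comp_inj_on inj_on_subset[of \<sigma> UNIV] image_Int[symmetric] image_subset_iff)
qed

lemma pact_polytabloid:
  assumes "\<sigma> permutes {..<n}"
  shows "pact \<sigma> (polytabloid x a b) = polytabloid x (\<sigma> \<circ> a) (\<sigma> \<circ> b)"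
  using permutes_bij[OF assms]
  unfolding pact_def polytabloid_def
  by (intro ext sum.cong refl) (simp add: bij_inv_image_eq_iff image_Un image_comp)

lemma specht_pact:
  assumes "\<sigma> permutes {..<n}" "f \<in> specht n x"
  shows "pact \<sigma> f \<in> specht n x"
  using assms(2) unfolding specht_def
proof (rule cspan_closed[where P = "\<lambda>f. pact \<sigma> f \<in> cspan _"])
  fix v assume "v \<in> {polytabloid x a b |a b. is_tableau_cols n x a b}"
  then show "pact \<sigma> v \<in> cspan {polytabloid x a b |a b. is_tableau_cols n x a b}"
    using pact_polytabloid[OF assms(1)] tableau_cols_permute[OF assms(1)]
    by (blast intro: cspan_base)
qed (simp_all add: pact_def cspan_zero cspan_add cspan_scale)

section \<open>Isotypic components are eigenspaces of the Casimir operator\<close>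

lemma qinner_sum_right:
  "finite P \<Longrightarrow> qinner n g (\<lambda>S. \<Sum>p\<in>P. h p S) = (\<Sum>p\<in>P. qinner n g (h p))"
  unfolding qinner_def by (simp add: sum_distrib_left sum.swap[of _ P])

lemma qinner_sum_left:
  "finite P \<Longrightarrow> qinner n (\<lambda>S. \<Sum>p\<in>P. h p S) f = (\<Sum>p\<in>P. qinner n (h p) f)"
  unfolding qinner_def by (simp add: sum_distrib_right sum.swap[of _ P])

lemma qinner_scale_right: "qinner n g (\<lambda>S. c * f S) = c * qinner n g f"
  unfolding qinner_def by (simp add: sum_distrib_left algebra_simps)

lemma qinner_scale_left: "qinner n (\<lambda>S. c * g S) f = cnj c * qinner n g f"
  unfolding qinner_def by (simp add: sum_distrib_left algebra_simps)

lemma qinner_diff_right: "qinner n g (\<lambda>S. f S - h S) = qinner n g f - qinner n g h"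
  unfolding qinner_def by (simp add: sum_subtractf algebra_simps)

lemma qinner_diff_left: "qinner n (\<lambda>S. f S - h S) g = qinner n f g - qinner n h g"
  unfolding qinner_def by (simp add: sum_subtractf algebra_simps)

lemma qinner_pact_transpose:
  assumes "i < n" "j < n"
  shows "qinner n g (pact (transpose i j) f) = qinner n (pact (transpose i j) g) f"
proof -
  let ?t = "transpose i j"
  have t: "?t permutes {..<n}" using assms by (intro permutes_swap_id) auto
  have "qinner n g (pact ?t f) = (\<Sum>S\<in>Pow {..<n}. cnj (g S) * f (?t ` S))"
    by (simp add: qinner_def pact_def)
  also have "\<dots> = (\<Sum>S\<in>Pow {..<n}. cnj (g (?t ` S)) * f S)"
    by (rule sum.reindex_bij_witness[of _ "(`) ?t" "(`) ?t"])
      (auto simp: image_comp permutes_image_subset_lessThan_iff[OF t])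
  also have "\<dots> = qinner n (pact ?t g) f" by (simp add: qinner_def pact_def)
  finally show ?thesis .
qed

lemma casimir_self_adjoint:
  assumes "is_qvec n f" "is_qvec n g"
  shows "qinner n g (casimir n f) = qinner n (casimir n g) f"
proof -
  let ?P = "{..<n} \<times> {..<n}" and ?t = "\<lambda>p. transpose (fst p) (snd p)"
  have fin: "finite ?P" by simp
  have "qinner n g (casimir n f) = (\<Sum>p\<in>?P. (1/2) * (qinner n g f - qinner n g (pact (?t p) f)))"
    by (simp only: casimir_transpositions[OF assms(1)] qinner_sum_right[OF fin] qinner_scale_right
        qinner_diff_right)
  also have "\<dots> = (\<Sum>p\<in>?P. (1/2) * (qinner n g f - qinner n (pact (?t p) g) f))"
    by (intro sum.cong refl) (auto simp: qinner_pact_transpose)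
  also have "\<dots> = qinner n (casimir n g) f"
    by (simp only: casimir_transpositions[OF assms(2)] qinner_sum_left[OF fin] qinner_scale_left
        qinner_diff_left complex_cnj_divide complex_cnj_one complex_cnj_numeral)
  finally show ?thesis .
qed

lemma equiv_map_add:
  "equiv_map n x L \<Longrightarrow> f \<in> specht n x \<Longrightarrow> g \<in> specht n x \<Longrightarrow>
    L (\<lambda>S. f S + g S) = (\<lambda>S. L f S + L g S)"
  unfolding equiv_map_def by blast

lemma equiv_map_scale:
  "equiv_map n x L \<Longrightarrow> f \<in> specht n x \<Longrightarrow> L (\<lambda>S. c * f S) = (\<lambda>S. c * L f S)"
  unfolding equiv_map_def by blast

lemma equiv_map_pact:
  "equiv_map n x L \<Longrightarrow> \<sigma> permutes {..<n} \<Longrightarrow> f \<in> specht n x \<Longrightarrow> L (pact \<sigma> f) = pact \<sigma> (L f)"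
  unfolding equiv_map_def by blast

lemma equiv_map_is_qvec: "equiv_map n x L \<Longrightarrow> f \<in> specht n x \<Longrightarrow> is_qvec n (L f)"
  unfolding equiv_map_def by blast

lemma equiv_map_diff:
  assumes "equiv_map n x L" "f \<in> specht n x" "g \<in> specht n x"
  shows "L (\<lambda>S. f S - g S) = (\<lambda>S. L f S - L g S)"
  using equiv_map_add[OF assms(1,2) qsubspace_scale[OF qsubspace_specht assms(3)], of "- 1"]
    equiv_map_scale[OF assms(1,3), of "- 1"]
  by simp

lemma equiv_map_sum:
  assumes "equiv_map n x L" "finite P" "\<And>p. p \<in> P \<Longrightarrow> g p \<in> specht n x"
  shows "L (\<lambda>S. \<Sum>p\<in>P. c * g p S) = (\<lambda>S. \<Sum>p\<in>P. c * L (g p) S)"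
  using assms(2,3)
proof (induction P rule: finite_induct)
  case empty
  then show ?case
    using equiv_map_scale[OF assms(1) qsubspace_zero[OF qsubspace_specht], of 0] by simp
next
  case (insert q P)
  have "(\<lambda>S. c * g q S) \<in> specht n x"
    using insert.prems by (simp add: qsubspace_scale[OF qsubspace_specht])
  moreover have "(\<lambda>S. \<Sum>p\<in>P. c * g p S) \<in> specht n x"
    using insert.hyps(1) insert.prems unfolding specht_def by (intro cspan_sum) auto
  ultimately show ?case
    using insert equiv_map_add[OF assms(1)] equiv_map_scale[OF assms(1)] by simp
qed

lemma specht_casimir:
  assumes "f \<in> specht n x"
  shows "casimir n f = (\<lambda>S. casimir_eig n x * f S)"
  using specht_highest_weight[OF assms] casimir_weight_space[of f n x]
  by (simp add: qlinear_zero[OF qlinear_raise_op])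

lemma casimir_equiv_map:
  assumes "equiv_map n x L" "f \<in> specht n x"
  shows "casimir n (L f) = L (casimir n f)"
proof -
  let ?P = "{..<n} \<times> {..<n}" and ?t = "\<lambda>p. transpose (fst p) (snd p)"
  have t: "?t p permutes {..<n}" if "p \<in> ?P" for p
    using that by (intro permutes_swap_id) auto
  have "f \<in> weight_space n x" using specht_highest_weight[OF assms(2)] by simp
  have "L (casimir n f) = (\<lambda>S. \<Sum>p\<in>?P. (1/2) * L (\<lambda>S. f S - pact (?t p) f S) S)"
    unfolding casimir_transpositions[OF weight_space_is_qvec[OF \<open>f \<in> weight_space n x\<close>]]
    by (rule equiv_map_sum[OF assms(1)])
      (auto intro: qsubspace_diff[OF qsubspace_specht assms(2) specht_pact[OF t assms(2)]])
  also have "\<dots> = (\<lambda>S. \<Sum>p\<in>?P. (1/2) * (L f S - pact (?t p) (L f) S))"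
    using equiv_map_diff[OF assms specht_pact[OF t assms(2)]] equiv_map_pact[OF assms(1) t assms(2)]
    by (intro ext sum.cong refl) simp
  also have "\<dots> = casimir n (L f)"
    by (rule casimir_transpositions[OF equiv_map_is_qvec[OF assms], symmetric])
  finally show ?thesis by simp
qed

lemma isotypic_casimir:
  assumes "v \<in> isotypic n x"
  shows "is_qvec n v \<and> casimir n v = (\<lambda>S. casimir_eig n x * v S)"
  using assms unfolding isotypic_def
proof (rule cspan_closed)
  fix v assume "v \<in> {L f |L f. equiv_map n x L \<and> f \<in> specht n x}"
  then obtain L f where "v = L f" "equiv_map n x L" "f \<in> specht n x" by blast
  then show "is_qvec n v \<and> casimir n v = (\<lambda>S. casimir_eig n x * v S)"
    using casimir_equiv_map specht_casimir equiv_map_scale equiv_map_is_qvec by simp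
qed (simp_all add: qlinear_add[OF qlinear_casimir] qlinear_scale[OF qlinear_casimir]
    qlinear_zero[OF qlinear_casimir] is_qvec_def algebra_simps)

lemma raise_lower_casimir_eigenvector:
  assumes "v \<in> weight_space n w" "casimir n v = (\<lambda>S. c * v S)"
  shows "raise_op n (lower_op n v) = (\<lambda>S. (casimir_eig n w - c) * v S)"
  using casimir_weight_space[OF assms(1)] assms(2) by (simp add: fun_eq_iff algebra_simps)

lemma lower_casimir_eigenvector:
  assumes "casimir n v = (\<lambda>S. c * v S)"
  shows "casimir n (lower_op n v) = (\<lambda>S. c * lower_op n v S)"
  by (simp add: casimir_lower_commute assms qlinear_scale[OF qlinear_lower_op])

lemma casimir_eigenvector_highest_weight:
  assumes "2 * x \<le> n" "v \<in> weight_space n x" "casimir n v = (\<lambda>S. casimir_eig n x * v S)"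
  shows "lower_op n v = (\<lambda>S. 0)"
proof (cases x)
  case (Suc w)
  show ?thesis
  proof (rule casimir_eigenvector_eq_0[OF _ lower_casimir_eigenvector[OF assms(3)]])
    show "lower_op n v \<in> weight_space n w" using lower_op_weight_space assms(2) Suc by simp
    fix y assume "y \<le> w" "y \<le> n - w"
    then show "casimir_eig n y \<noteq> casimir_eig n x" using Suc assms(1) by (intro casimir_eig_neq) auto
  qed
qed (use lower_op_weight_space_0 assms(2) in simp)

text \<open>Above weight \<open>x\<close>, \<open>raise_op \<circ> lower_op\<close> acts on the \<open>casimir_eig n x\<close>-eigenspace by the
  nonzero scalar \<open>casimir_eig n w - casimir_eig n x\<close>, so \<open>lower_op\<close> can be inverted step by step.\<close>
lemma casimir_eigenvector_raise_pow:
  assumes "2 * x \<le> n" "x \<le> w" "w \<le> n - x" "v \<in> weight_space n w"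
    and "casimir n v = (\<lambda>S. casimir_eig n x * v S)"
  shows "\<exists>h. h \<in> weight_space n x \<and> lower_op n h = (\<lambda>S. 0) \<and> v = (raise_op n ^^ (w - x)) h"
  using assms(2-5)
proof (induction w arbitrary: v)
  case (Suc w)
  show ?case
  proof (cases "x = Suc w")
    case False
    then have "x \<le> w" using Suc.prems(1) by simp
    define \<mu> where "\<mu> = casimir_eig n (Suc w) - casimir_eig n x"
    have "\<mu> \<noteq> 0"
      using casimir_eig_neq[of "Suc w" x n] False Suc.prems(2) assms(1) by (simp add: \<mu>_def)
    define v' where "v' = (\<lambda>S. (1 / \<mu>) * lower_op n v S)"
    have "raise_op n v' = v"
      using raise_lower_casimir_eigenvector[OF Suc.prems(3,4)] \<open>\<mu> \<noteq> 0\<close>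
      unfolding v'_def qlinear_scale[OF qlinear_raise_op] \<mu>_def[symmetric] by simp
    moreover have "v' \<in> weight_space n w"
      unfolding v'_def
      by (rule qsubspace_scale[OF qsubspace_weight_space lower_op_weight_space[OF Suc.prems(3)]])
    moreover have "casimir n v' = (\<lambda>S. casimir_eig n x * v' S)"
      unfolding v'_def qlinear_scale[OF qlinear_casimir] lower_casimir_eigenvector[OF Suc.prems(4)]
      by (simp add: algebra_simps)
    ultimately obtain h where "h \<in> weight_space n x" "lower_op n h = (\<lambda>S. 0)"
      "v = raise_op n ((raise_op n ^^ (w - x)) h)"
      using Suc.IH[OF \<open>x \<le> w\<close>] Suc.prems(2) by fastforce
    moreover have "Suc w - x = Suc (w - x)" using \<open>x \<le> w\<close> by simp
    ultimately show ?thesis by auto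
  qed (use casimir_eigenvector_highest_weight[OF assms(1)] Suc.prems in auto)
qed (use casimir_eigenvector_highest_weight[OF assms(1)] in auto)

lemma casimir_eigenvector_in_isotypic:
  assumes "2 * x \<le> n" "v \<in> weight_space n w" "casimir n v = (\<lambda>S. casimir_eig n x * v S)"
  shows "v \<in> isotypic n x"
proof (cases "x \<le> w \<and> w \<le> n - x")
  case True
  then obtain h where "h \<in> weight_space n x" "lower_op n h = (\<lambda>S. 0)"
    "v = (raise_op n ^^ (w - x)) h"
    using casimir_eigenvector_raise_pow[OF assms(1) _ _ assms(2,3)] by blast
  then show ?thesis
    using highest_weight_in_specht[OF assms(1)] equiv_map_raise_op_pow unfolding isotypic_def
    by (blast intro: cspan_base)
next
  case False
  have "v = (\<lambda>S. 0)"
  proof (cases "w \<le> n")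
    case True
    show ?thesis
    proof (rule casimir_eigenvector_eq_0[OF assms(2,3)])
      fix y assume "y \<le> w" "y \<le> n - w"
      then show "casimir_eig n y \<noteq> casimir_eig n x"
        using False True assms(1) by (intro casimir_eig_neq) auto
    qed
  qed (use weight_space_above[OF assms(2)] in simp)
  then show ?thesis unfolding isotypic_def by (simp add: cspan_zero)
qed

lemma isotypic_decomposition:
  assumes "f \<in> weight_space n w" "w \<le> n"
  shows "\<exists>F. (\<forall>x\<le>n div 2. F x \<in> isotypic n x) \<and> f = (\<lambda>S. \<Sum>x\<le>n div 2. F x S)"
proof -
  obtain g where "\<forall>x. g x \<in> weight_space n w \<and> casimir n (g x) = (\<lambda>S. casimir_eig n x * g x S)"
    "f = (\<lambda>S. \<Sum>x\<le>n div 2. g x S)"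
    using casimir_eigen_decomposition[OF assms] by blast
  moreover have "2 * x \<le> n" if "x \<le> n div 2" for x using that by simp
  ultimately show ?thesis using casimir_eigenvector_in_isotypic by blast
qed

lemma qinner_self_eq_0:
  assumes "is_qvec n d" "qinner n d d = 0"
  shows "d = (\<lambda>S. 0)"
proof
  fix S
  have "cnj (d T) * d T = complex_of_real ((Re (d T))\<^sup>2 + (Im (d T))\<^sup>2)" for T
    using complex_mult_cnj[of "d T"] by (simp add: mult.commute)
  then have "(\<Sum>T\<in>Pow {..<n}. (Re (d T))\<^sup>2 + (Im (d T))\<^sup>2) = Re (qinner n d d)"
    unfolding qinner_def by simp
  then have "(\<Sum>T\<in>Pow {..<n}. (Re (d T))\<^sup>2 + (Im (d T))\<^sup>2) = 0"
    using assms(2) by simp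
  then have "(Re (d S))\<^sup>2 + (Im (d S))\<^sup>2 = 0" if "S \<subseteq> {..<n}"
    using that by (subst (asm) sum_nonneg_eq_0_iff) auto
  then show "d S = 0"
    using assms(1) by (cases "S \<subseteq> {..<n}") (simp_all add: complex_eq_iff is_qvec_def)
qed

lemma orth_proj_eqI:
  assumes "qsubspace U" "\<And>w. w \<in> U \<Longrightarrow> is_qvec n w"
    and "u \<in> U" "\<And>w. w \<in> U \<Longrightarrow> qinner n w (\<lambda>S. v S - u S) = 0"
  shows "orth_proj n U v = u"
  unfolding orth_proj_def
proof (rule the_equality)
  fix u' assume u': "u' \<in> U \<and> (\<forall>w\<in>U. qinner n w (\<lambda>S. v S - u' S) = 0)"
  define d where "d = (\<lambda>S. u' S - u S)"
  have "d \<in> U" unfolding d_def using qsubspace_diff[OF assms(1)] u' assms(3) by blast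
  have "qinner n d (\<lambda>S. (v S - u S) - (v S - u' S)) = 0"
    using assms(4)[OF \<open>d \<in> U\<close>] u' \<open>d \<in> U\<close> by (simp add: qinner_diff_right)
  then have "qinner n d d = 0" by (simp add: d_def)
  then have "d = (\<lambda>S. 0)" using qinner_self_eq_0 assms(2)[OF \<open>d \<in> U\<close>] by blast
  then show "u' = u" by (simp add: d_def fun_eq_iff)
qed (use assms(3,4) in blast)

lemma casimir_eigenvectors_orthogonal:
  assumes "is_qvec n f" "is_qvec n g"
    and "casimir n f = (\<lambda>S. casimir_eig n y * f S)" "casimir n g = (\<lambda>S. casimir_eig n x * g S)"
    and "casimir_eig n x \<noteq> casimir_eig n y"
  shows "qinner n g f = 0"
proof -
  have "casimir_eig n y * qinner n g f = qinner n g (casimir n f)"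
    by (simp add: assms(3) qinner_scale_right)
  also have "\<dots> = qinner n (casimir n g) f" by (rule casimir_self_adjoint[OF assms(1,2)])
  also have "\<dots> = casimir_eig n x * qinner n g f"
    by (simp add: assms(4) qinner_scale_left casimir_eig_def)
  finally show ?thesis using assms(5) by simp
qed

lemma orth_proj_isotypic:
  assumes "\<And>y. y \<le> n div 2 \<Longrightarrow> F y \<in> isotypic n y" "x \<le> n div 2"
  shows "orth_proj n (isotypic n x) (\<lambda>S. \<Sum>y\<le>n div 2. F y S) = F x"
proof (rule orth_proj_eqI)
  show "qsubspace (isotypic n x)" unfolding isotypic_def by (rule qsubspace_cspan)
  show "is_qvec n w" if "w \<in> isotypic n x" for w using isotypic_casimir[OF that] by blast
  show "F x \<in> isotypic n x" using assms by blast
  fix w assume "w \<in> isotypic n x"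
  have "qinner n w (F y) = 0" if "y \<in> {..n div 2} - {x}" for y
  proof (rule casimir_eigenvectors_orthogonal)
    show "is_qvec n (F y)" "casimir n (F y) = (\<lambda>S. casimir_eig n y * F y S)"
      using isotypic_casimir[OF assms(1)] that by auto
    show "is_qvec n w" "casimir n w = (\<lambda>S. casimir_eig n x * w S)"
      using isotypic_casimir[OF \<open>w \<in> isotypic n x\<close>] by auto
    show "casimir_eig n x \<noteq> casimir_eig n y"
      using that assms(2) by (intro casimir_eig_neq) auto
  qed
  moreover have "(\<lambda>S. (\<Sum>y\<le>n div 2. F y S) - F x S) = (\<lambda>S. \<Sum>y\<in>{..n div 2} - {x}. F y S)"
    using assms(2) by (simp add: sum_diff1)
  ultimately show "qinner n w (\<lambda>S. (\<Sum>y\<le>n div 2. F y S) - F x S) = 0"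
    by (simp add: qinner_sum_right)
qed

section \<open>The states \<open>\<Xi>\<close> and the distribution \<open>p(x | n, m, k, l)\<close>\<close>

definition Xi_support :: "nat \<Rightarrow> nat \<Rightarrow> nat \<Rightarrow> nat \<Rightarrow> nat set set" where
  "Xi_support n m k l =
    {S. S \<subseteq> {..<n} \<and> {..<l} \<subseteq> S \<and> S \<inter> {l..<k} = {} \<and> card (S \<inter> {k..<n}) = m - l}"

definition Xi_amplitude :: "nat \<Rightarrow> nat \<Rightarrow> nat \<Rightarrow> nat \<Rightarrow> complex" where
  "Xi_amplitude n m k l = complex_of_real (1 / sqrt (real ((n - k) choose (m - l))))"

lemma Xi_eq: "Xi n m k l S = (if S \<in> Xi_support n m k l then Xi_amplitude n m k l else 0)"
  unfolding Xi_def Xi_support_def Xi_amplitude_def by simp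

lemma Xi_support_eq:
  assumes "S \<in> Xi_support n m k l" "l \<le> k"
  shows "S = {..<l} \<union> (S \<inter> {k..<n})"
  using assms unfolding Xi_support_def by (auto simp: subset_iff not_less)

lemma card_mem_Xi_support:
  assumes "S \<in> Xi_support n m k l" "l \<le> m" "l \<le> k"
  shows "card S = m"
proof -
  have "card S = card {..<l} + card (S \<inter> {k..<n})"
    using assms(3) by (subst Xi_support_eq[OF assms(1,3)]) (rule card_Un_disjoint, auto)
  then show ?thesis using assms(1,2) by (simp add: Xi_support_def)
qed

lemma Xi_weight_space:
  assumes "l \<le> m" "l \<le> k"
  shows "Xi n m k l \<in> weight_space n m"
proof -
  have "S \<notin> Xi_support n m k l" if "\<not> S \<subseteq> {..<n} \<or> card S \<noteq> m" for S
    using that card_mem_Xi_support[OF _ assms, of S] by (auto simp: Xi_support_def)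
  then show ?thesis by (simp add: weight_space_def is_qvec_def Xi_eq)
qed

lemma card_Xi_support:
  assumes "l \<le> k" "k \<le> n"
  shows "card (Xi_support n m k l) = (n - k) choose (m - l)"
proof -
  have "bij_betw (\<lambda>R. {..<l} \<union> R) {R. R \<subseteq> {k..<n} \<and> card R = m - l} (Xi_support n m k l)"
  proof (rule bij_betw_byWitness[where f' = "\<lambda>S. S \<inter> {k..<n}"])
    show "\<forall>R\<in>{R. R \<subseteq> {k..<n} \<and> card R = m - l}. ({..<l} \<union> R) \<inter> {k..<n} = R"
      using assms(1) by auto
    show "\<forall>S\<in>Xi_support n m k l. {..<l} \<union> S \<inter> {k..<n} = S"
      by (intro ballI) (rule Xi_support_eq[OF _ assms(1), symmetric])
    show "(\<lambda>R. {..<l} \<union> R) ` {R. R \<subseteq> {k..<n} \<and> card R = m - l} \<subseteq> Xi_support n m k l"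
    proof
      fix S assume "S \<in> (\<lambda>R. {..<l} \<union> R) ` {R. R \<subseteq> {k..<n} \<and> card R = m - l}"
      then obtain R where "R \<subseteq> {k..<n}" "card R = m - l" "S = {..<l} \<union> R" by blast
      moreover have "({..<l} \<union> R) \<inter> {k..<n} = R" "({..<l} \<union> R) \<inter> {l..<k} = {}"
        "{..<l} \<union> R \<subseteq> {..<n}"
        using \<open>R \<subseteq> {k..<n}\<close> assms by auto
      ultimately show "S \<in> Xi_support n m k l" by (simp add: Xi_support_def)
    qed
    show "(\<lambda>S. S \<inter> {k..<n}) ` Xi_support n m k l \<subseteq> {R. R \<subseteq> {k..<n} \<and> card R = m - l}"
      by (auto simp: Xi_support_def)
  qed
  then show ?thesis using n_subsets[of "{k..<n}" "m - l"] by (simp add: bij_betw_same_card)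
qed

lemma Xi_norm:
  assumes "l \<le> k" "k \<le> n" "m - l \<le> n - k"
  shows "qinner n (Xi n m k l) (Xi n m k l) = 1"
proof -
  let ?C = "real ((n - k) choose (m - l))"
  have "?C > 0" using assms(3) by simp
  then have "cnj (Xi_amplitude n m k l) * Xi_amplitude n m k l = complex_of_real (1 / ?C)"
    by (simp add: Xi_amplitude_def flip: of_real_mult)
  moreover have "qinner n (Xi n m k l) (Xi n m k l) =
      (\<Sum>S\<in>Pow {..<n}. if S \<in> Xi_support n m k l
        then cnj (Xi_amplitude n m k l) * Xi_amplitude n m k l else 0)"
    unfolding qinner_def Xi_eq by (intro sum.cong refl) simp
  moreover have "{S \<in> Pow {..<n}. S \<in> Xi_support n m k l} = Xi_support n m k l"
    by (auto simp: Xi_support_def)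
  ultimately have "qinner n (Xi n m k l) (Xi n m k l) =
      of_nat (card (Xi_support n m k l)) * (1 / ?C)"
    by (simp add: sum.inter_filter[symmetric])
  then show ?thesis using card_Xi_support[OF assms(1,2)] \<open>?C > 0\<close> by simp
qed

lemma insert_Diff_Xi_support_iff:
  assumes "S \<in> Xi_support n m k l" "l \<le> k" "i \<in> S" "j \<in> {..<n} - S"
  shows "insert j (S - {i}) \<in> Xi_support n m k l \<longleftrightarrow> k \<le> i \<and> k \<le> j"
proof -
  have S: "S \<subseteq> {..<n}" "{..<l} \<subseteq> S" "S \<inter> {l..<k} = {}" "card (S \<inter> {k..<n}) = m - l"
    using assms(1) unfolding Xi_support_def by auto
  then have "finite S" using finite_subset by blast
  have "l \<le> j" using assms(4) S(2) by (meson DiffD2 le_less_linear lessThan_iff subsetD)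
  show ?thesis
  proof (cases "k \<le> i")
    case False
    then have "i < l" using assms(3) S(3) by (cases "i < l") auto
    then show ?thesis using False assms(3,4) S(2) unfolding Xi_support_def by auto
  next
    case True
    have "card (insert j (S - {i}) \<inter> {k..<n}) = m - l" if "k \<le> j"
    proof -
      have "insert j (S - {i}) \<inter> {k..<n} = insert j ((S \<inter> {k..<n}) - {i})"
        using assms(4) that by auto
      moreover have "i \<in> S \<inter> {k..<n}" using True assms(3) S(1) by auto
      moreover have "card (S \<inter> {k..<n}) > 0" using \<open>finite S\<close> calculation(2) card_gt_0_iff by blast
      ultimately show ?thesis using assms(4) S(4) \<open>finite S\<close> by (simp add: card_Diff_singleton)
    qed
    then show ?thesis
      using assms(2,4) S True \<open>l \<le> j\<close> unfolding Xi_support_def by (cases "k \<le> j") auto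
  qed
qed

lemma sum_Xi_move_one:
  assumes "S \<in> Xi_support n m k l" "l \<le> k" "i \<in> S"
  shows "(\<Sum>j\<in>{..<n} - S. Xi n m k l (insert j (S - {i}))) =
    (if k \<le> i then of_nat (n - k - (m - l)) * Xi_amplitude n m k l else 0)"
proof -
  have "card (S \<inter> {k..<n}) = m - l" using assms(1) by (simp add: Xi_support_def)
  have "(\<Sum>j\<in>{..<n} - S. Xi n m k l (insert j (S - {i}))) =
      (\<Sum>j\<in>{..<n} - S. if k \<le> i \<and> k \<le> j then Xi_amplitude n m k l else 0)"
    by (intro sum.cong refl) (simp add: Xi_eq insert_Diff_Xi_support_iff[OF assms])
  also have "\<dots> = (\<Sum>j\<in>{j \<in> {..<n} - S. k \<le> i \<and> k \<le> j}. Xi_amplitude n m k l)"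
    by (rule sum.inter_filter[symmetric]) simp
  also have "{j \<in> {..<n} - S. k \<le> i \<and> k \<le> j} = (if k \<le> i then {k..<n} - (S \<inter> {k..<n}) else {})"
    by auto
  finally show ?thesis
    using \<open>card (S \<inter> {k..<n}) = m - l\<close> by (simp add: card_Diff_subset)
qed

text \<open>Only the moves of a \<open>1\<close> within the last \<open>n - k\<close> positions stay in the support of \<open>\<Xi>\<close>.\<close>
lemma casimir_Xi:
  assumes "S \<in> Xi_support n m k l" "l \<le> m" "l \<le> k"
  shows "casimir n (Xi n m k l) S =
    (casimir_eig n m - of_nat m - of_nat (m - l) * of_nat (n - k - (m - l))) * Xi n m k l S"
proof -
  let ?N = "of_nat (n - k - (m - l)) * Xi_amplitude n m k l"
  have S: "S \<subseteq> {..<n}" "card S = m"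
    using assms(1) card_mem_Xi_support[OF assms] by (simp_all add: Xi_support_def)
  then have "finite S" using finite_subset by blast
  have "{i \<in> S. k \<le> i} = S \<inter> {k..<n}" using S(1) by auto
  then have card: "card {i \<in> S. k \<le> i} = m - l" using assms(1) by (simp add: Xi_support_def)
  have "(\<Sum>i\<in>S. \<Sum>j\<in>{..<n} - S. Xi n m k l (insert j (S - {i}))) =
      (\<Sum>i\<in>S. if k \<le> i then ?N else 0)"
    by (intro sum.cong refl) (rule sum_Xi_move_one[OF assms(1,3)])
  also have "\<dots> = (\<Sum>i\<in>{i \<in> S. k \<le> i}. ?N)"
    by (rule sum.inter_filter[symmetric]) (rule \<open>finite S\<close>)
  finally have "(\<Sum>i\<in>S. \<Sum>j\<in>{..<n} - S. Xi n m k l (insert j (S - {i}))) = of_nat (m - l) * ?N"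
    using card by simp
  then show ?thesis
    using S assms(1)
    by (simp add: casimir_def weight_mult_apply raise_lower_expand Xi_eq algebra_simps)
qed

lemma qinner_Xi_casimir_Xi:
  assumes "l \<le> m" "l \<le> k" "k \<le> n" "m - l \<le> n - k"
  shows "qinner n (Xi n m k l) (casimir n (Xi n m k l)) =
    casimir_eig n m - of_nat m - of_nat (m - l) * of_nat (n - k - (m - l))"
proof -
  let ?K = "casimir_eig n m - of_nat m - of_nat (m - l) * of_nat (n - k - (m - l))"
  have eq: "cnj (Xi n m k l S) * casimir n (Xi n m k l) S =
      cnj (Xi n m k l S) * (?K * Xi n m k l S)"
    for S by (cases "S \<in> Xi_support n m k l") (simp_all add: casimir_Xi assms(1,2) Xi_eq)
  have "qinner n (Xi n m k l) (casimir n (Xi n m k l)) =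
      qinner n (Xi n m k l) (\<lambda>S. ?K * Xi n m k l S)"
    unfolding qinner_def by (intro sum.cong refl eq)
  then show ?thesis by (simp add: qinner_scale_right Xi_norm assms(2-4))
qed

lemma pdist_isotypic_decomposition:
  assumes "l \<le> m" "l \<le> k" "m \<le> n"
  obtains F where "\<And>x. x \<le> n div 2 \<Longrightarrow> F x \<in> isotypic n x"
    and "Xi n m k l = (\<lambda>S. \<Sum>x\<le>n div 2. F x S)"
    and "\<And>x. x \<le> n div 2 \<Longrightarrow> pdist x n m k l = Re (qinner n (Xi n m k l) (F x))"
proof -
  obtain F where F: "\<And>x. x \<le> n div 2 \<Longrightarrow> F x \<in> isotypic n x"
    and \<Xi>_eq: "Xi n m k l = (\<lambda>S. \<Sum>x\<le>n div 2. F x S)"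
    using isotypic_decomposition[OF Xi_weight_space[OF assms(1,2)] assms(3)] by blast
  have "pdist x n m k l = Re (qinner n (Xi n m k l) (F x))" if "x \<le> n div 2" for x
    unfolding pdist_def using orth_proj_isotypic[OF F that] \<Xi>_eq by simp
  then show ?thesis using that[OF F \<Xi>_eq] by blast
qed

lemma sum_pdist:
  assumes "l \<le> m" "l \<le> k" "k \<le> n" "m \<le> n" "m - l \<le> n - k"
  shows "(\<Sum>x\<le>n div 2. pdist x n m k l) = 1"
proof -
  obtain F where "Xi n m k l = (\<lambda>S. \<Sum>x\<le>n div 2. F x S)"
    and p: "\<And>x. x \<le> n div 2 \<Longrightarrow> pdist x n m k l = Re (qinner n (Xi n m k l) (F x))"
    using pdist_isotypic_decomposition[OF assms(1,2,4)] by blast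
  then have "(\<Sum>x\<le>n div 2. pdist x n m k l) = Re (qinner n (Xi n m k l) (Xi n m k l))"
    by (simp add: qinner_sum_right)
  then show ?thesis using Xi_norm[OF assms(2,3,5)] by simp
qed

lemma sum_casimir_eig_pdist:
  assumes "l \<le> m" "l \<le> k" "k \<le> n" "m \<le> n" "m - l \<le> n - k"
  shows "(\<Sum>x\<le>n div 2. real x * (real n + 1 - real x) * pdist x n m k l) =
    real m * (real n - real m) - (real m - real l) * (real n - real m - real k + real l)"
proof -
  let ?\<Xi> = "Xi n m k l"
  obtain F where F: "\<And>x. x \<le> n div 2 \<Longrightarrow> F x \<in> isotypic n x"
    and \<Xi>_eq: "?\<Xi> = (\<lambda>S. \<Sum>x\<le>n div 2. F x S)"
    and p: "\<And>x. x \<le> n div 2 \<Longrightarrow> pdist x n m k l = Re (qinner n ?\<Xi> (F x))"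
    using pdist_isotypic_decomposition[OF assms(1,2,4)] by blast
  have "qinner n ?\<Xi> (casimir n (F x)) =
      complex_of_real (real x * (real n + 1 - real x)) * qinner n ?\<Xi> (F x)" if "x \<le> n div 2" for x
  proof -
    have "casimir_eig n x = complex_of_real (real x * (real n + 1 - real x))"
      by (simp add: casimir_eig_def)
    then show ?thesis using isotypic_casimir[OF F[OF that]] by (simp add: qinner_scale_right)
  qed
  then have "(\<Sum>x\<le>n div 2. real x * (real n + 1 - real x) * pdist x n m k l) =
      Re (qinner n ?\<Xi> (casimir n (\<lambda>S. \<Sum>x\<le>n div 2. F x S)))"
    by (simp add: p qlinear_sum[OF qlinear_casimir] qinner_sum_right)
  also have "\<dots> = Re (casimir_eig n m - of_nat m - of_nat (m - l) * of_nat (n - k - (m - l)))"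
    using qinner_Xi_casimir_Xi[OF assms(1-3,5)] \<Xi>_eq by simp
  also have "\<dots> =
      real m * (real n - real m) - (real m - real l) * (real n - real m - real k + real l)"
    using assms by (simp add: casimir_eig_def of_nat_diff algebra_simps)
  finally show ?thesis .
qed

lemma variance_from_moments:
  fixes p :: "nat \<Rightarrow> real"
  assumes "(\<Sum>x\<in>I. p x) = 1" "(\<Sum>x\<in>I. real x * (c - real x) * p x) = K"
  defines "E \<equiv> \<Sum>x\<in>I. real x * p x"
  shows "(\<Sum>x\<in>I. (real x - E)\<^sup>2 * p x) = c * E - K - E\<^sup>2"
proof -
  have "(real x - E)\<^sup>2 * p x = c * (real x * p x) - real x * (c - real x) * p x
      - 2 * E * (real x * p x) + E\<^sup>2 * p x" for x
    by (simp add: power2_eq_square algebra_simps)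
  then have "(\<Sum>x\<in>I. (real x - E)\<^sup>2 * p x) =
      c * E - (\<Sum>x\<in>I. real x * (c - real x) * p x) - 2 * E * E + E\<^sup>2 * (\<Sum>x\<in>I. p x)"
    by (simp add: E_def sum.distrib sum_subtractf sum_distrib_left)
  then show ?thesis using assms(1,2) by (simp add: power2_eq_square)
qed

theorem theorem4p12:
  fixes n m k l :: nat
  assumes "n \<ge> 1" and "m \<le> n" and "k \<le> n"
    and "int m + int k - int n \<le> int l" and "l \<le> min m k"
  shows "VX_p n m k l / real n ^ 2 =
           EX_p n m k l / real n * (1 - EX_p n m k l / real n) + EX_p n m k l / real n ^ 2
           - (real m * (real n - real m) - (real m - real l) * (real n - real m - real k + real l))
             / real n ^ 2"
proof -
  have "l \<le> m" "l \<le> k" "m - l \<le> n - k" using assms(3-5) by auto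
  have variance: "VX_p n m k l = (real n + 1) * EX_p n m k l
      - (real m * (real n - real m) - (real m - real l) * (real n - real m - real k + real l))
      - (EX_p n m k l)\<^sup>2"
    unfolding VX_p_def EX_p_def
    using \<open>l \<le> m\<close> \<open>l \<le> k\<close> assms(3,2) \<open>m - l \<le> n - k\<close>
    by (intro variance_from_moments sum_pdist sum_casimir_eig_pdist)
  have "real n \<noteq> 0" using assms(1) by simp
  then show ?thesis unfolding variance by (simp add: field_simps power2_eq_square)
qed

end
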